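(* For every sequence $V=(V_n)_n$ of $\widehat{\mathrm S}_n$-modules, $H^{cs,\widehat{\mathrm{FI}}}_0(\mathbf I(V))=0$ and $H^{cs,\widehat{\mathrm{FI}}}_{-1}(\mathbf I(V))\cong V$.
   Context: $\widehat{\mathrm S}_n=\{(\sigma,d)\in\mathrm S_n\times\mathbb Z: d\text{ odd}\iff\operatorname{sgn}\sigma=-1\}$ ($n\ge2$; trivial for $n=0,1$); $i_1,i_2$ inclusions on first/last letters. $\widehat{\mathrm{FI}}$: objects $n\in\mathbb N$, $\widehat{\mathrm{FI}}(n,m)=\widehat{\mathrm S}_m/i_2(\widehat{\mathrm S}_{m-n})$, composition $([s],[t])\mapsto[t\,i_1(s)]$; $\mathbf I(V)_m=\bigoplus_{n\le m}\mathbb Z[\widehat{\mathrm{FI}}(n,m)]\otimes_{\mathbb Z\widehat{\mathrm S}_n}V_n$ (left adjoint of the forgetful functor). Let $p_n:\mathrm{Br}_n\to\widehat{\mathrm S}_n$, $\sigma_{i,i+1}\mapsto((i\ i{+}1),1)$. For an $\widehat{\mathrm{FI}}$-module $M$ and $p\ge-1$, $C^{cs,\widehat{\mathrm{FI}}}_p(M)_n=\mathrm{Ind}_{i_1(\widehat{\mathrm S}_{n-p-1})}^{\widehat{\mathrm S}_n}M_{n-p-1}$, with face maps $f_i=(\mathrm{Ind}_{\widehat{\mathrm S}_{n-p}}^{\widehat{\mathrm S}_n}x_{n-p-1})\circ u_i$, where $x_k:\mathrm{Ind}_{i_1\widehat{\mathrm S}_k}^{\widehat{\mathrm S}_{k+1}}M_k\to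 M_{k+1}$ comes from the module structure and $u_i$ is right multiplication by $p_n(\sigma_{i-1,i}^{-1}\cdots\sigma_{1,2}^{-1})$ with the braid placed on the last $p+1$ strands; differential $\sum_{i=1}^{p+1}(-1)^if_i$. $H^{cs,\widehat{\mathrm{FI}}}_*$ is its homology; so $H_{-1}$ is the cokernel of $C_0\to C_{-1}=M$. *)

theory Defs
  imports "HOL-Algebra.Free_Abelian_Groups" "HOL-Algebra.Product_Groups"
          "HOL-Combinatorics.Permutations" "HOL-Combinatorics.Transposition"
begin

text \<open>An element of hat S_n is a pair (sigma, d) with sigma a permutation of the
  letters {0..<n} (0-indexed) and d an integer.  hat S_n is the subgroup of
  S_n x Z where d is odd iff sigma is odd (n >= 2); it is trivial for n = 0, 1.
  Multiplication is componentwise: (s,d)(t,e) = (s o t, d + e).\<close>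

type_synonym hs = "(nat \<Rightarrow> nat) \<times> int"

definition hatS :: "nat \<Rightarrow> hs set" where
  "hatS n = {(s, d). s permutes {..<n} \<and>
                     (if 2 \<le> n then (odd d \<longleftrightarrow> sign s = -1) else d = 0)}"

definition hmul :: "hs \<Rightarrow> hs \<Rightarrow> hs" where
  "hmul x y = (fst x \<circ> fst y, snd x + snd y)"

definition hone :: hs where
  "hone = (id, 0)"

definition hatSgrp :: "nat \<Rightarrow> hs monoid" where
  "hatSgrp n = \<lparr>carrier = hatS n, monoid.mult = hmul, one = hone\<rparr>"

text \<open>i_1 : hat S_k -> hat S_n (first letters) is literally the identity on our
  representation.  i_2 : hat S_l -> hat S_m puts the letters on the last l positions.\<close>

definition i2 :: "nat \<Rightarrow> nat \<Rightarrow> hs \<Rightarrow> hs" where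
  "i2 m l x = ((\<lambda>i. if m - l \<le> i \<and> i < m then fst x (i - (m - l)) + (m - l) else i), snd x)"

text \<open>hcos m n t is the class [t] of t in hat S_m / i_2(hat S_{m-n}) (left cosets).\<close>

definition hcos :: "nat \<Rightarrow> nat \<Rightarrow> hs \<Rightarrow> hs set" where
  "hcos m n t = t <#\<^bsub>hatSgrp m\<^esub> (i2 m (m - n) ` hatS (m - n))"

definition FIhat :: "nat \<Rightarrow> nat \<Rightarrow> hs set set" where
  "FIhat n m = (if n \<le> m then {hcos m n t | t. t \<in> hatS m} else {})"

text \<open>Composition of f = [s] : n -> m and g = [t] : m -> l is [t i_1(s)].\<close>

definition ficomp :: "nat \<Rightarrow> nat \<Rightarrow> nat \<Rightarrow> hs set \<Rightarrow> hs set \<Rightarrow> hs set" where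
  "ficomp n m l f g = {x. \<exists>s\<in>f. \<exists>t\<in>g. x \<in> hcos l n (hmul t s)}"

text \<open>A sequence of hat S_n-modules: abelian groups V n (HOL-Algebra, multiplicative
  notation) with a left action A n of hat S_n by group endomorphisms.\<close>

definition smod :: "(nat \<Rightarrow> 'v monoid) \<Rightarrow> (nat \<Rightarrow> hs \<Rightarrow> 'v \<Rightarrow> 'v) \<Rightarrow> bool" where
  "smod V A \<longleftrightarrow> (\<forall>n. comm_group (V n)
      \<and> (\<forall>g\<in>hatS n. A n g \<in> hom (V n) (V n))
      \<and> (\<forall>x\<in>carrier (V n). A n hone x = x)
      \<and> (\<forall>g\<in>hatS n. \<forall>h\<in>hatS n. \<forall>x\<in>carrier (V n). A n (hmul g h) x = A n g (A n h x)))"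

text \<open>X carries a right action rho of the group K, W is a K-module with action B.\<close>

definition tfree :: "'x set \<Rightarrow> 'w monoid \<Rightarrow> ('x \<times> 'w \<Rightarrow>\<^sub>0 int) monoid" where
  "tfree X W = free_Abelian_group (X \<times> carrier W)"

definition frel :: "'x set \<Rightarrow> ('x \<Rightarrow> hs \<Rightarrow> 'x) \<Rightarrow> hs set \<Rightarrow> 'w monoid \<Rightarrow> (hs \<Rightarrow> 'w \<Rightarrow> 'w)
                    \<Rightarrow> ('x \<times> 'w \<Rightarrow>\<^sub>0 int) set" where
  "frel X rho K W B =
     {frag_of (rho x k, w) - frag_of (x, B k w) | x k w. x \<in> X \<and> k \<in> K \<and> w \<in> carrier W}
   \<union> {frag_of (x, w \<otimes>\<^bsub>W\<^esub> w') - frag_of (x, w) - frag_of (x, w') | x w w'.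
         x \<in> X \<and> w \<in> carrier W \<and> w' \<in> carrier W}"

definition trel :: "'x set \<Rightarrow> ('x \<Rightarrow> hs \<Rightarrow> 'x) \<Rightarrow> hs set \<Rightarrow> 'w monoid \<Rightarrow> (hs \<Rightarrow> 'w \<Rightarrow> 'w)
                    \<Rightarrow> ('x \<times> 'w \<Rightarrow>\<^sub>0 int) set" where
  "trel X rho K W B = generate (tfree X W) (frel X rho K W B)"

definition tens :: "'x set \<Rightarrow> ('x \<Rightarrow> hs \<Rightarrow> 'x) \<Rightarrow> hs set \<Rightarrow> 'w monoid \<Rightarrow> (hs \<Rightarrow> 'w \<Rightarrow> 'w)
                    \<Rightarrow> ('x \<times> 'w \<Rightarrow>\<^sub>0 int) set monoid" where
  "tens X rho K W B = tfree X W Mod trel X rho K W B"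

definition qmap :: "('b, 'c) monoid_scheme \<Rightarrow> 'b set \<Rightarrow> ('a \<Rightarrow> 'b) \<Rightarrow> 'a set \<Rightarrow> 'b set" where
  "qmap G' H' phi X = H' #>\<^bsub>G'\<^esub> phi (SOME r. r \<in> X)"

text \<open>Right action of hat S_n on hat FI(n,m) by precomposition: [t].s = [t i_1(s)].\<close>

definition firact :: "nat \<Rightarrow> nat \<Rightarrow> hs set \<Rightarrow> hs \<Rightarrow> hs set" where
  "firact n m f s = ficomp n n m (hcos n n s) f"

definition Icomp :: "(nat \<Rightarrow> 'v monoid) \<Rightarrow> (nat \<Rightarrow> hs \<Rightarrow> 'v \<Rightarrow> 'v) \<Rightarrow> nat \<Rightarrow> nat
                     \<Rightarrow> (hs set \<times> 'v \<Rightarrow>\<^sub>0 int) set monoid" where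
  "Icomp V A n m = tens (FIhat n m) (firact n m) (hatS n) (V n) (A n)"

definition IV :: "(nat \<Rightarrow> 'v monoid) \<Rightarrow> (nat \<Rightarrow> hs \<Rightarrow> 'v \<Rightarrow> 'v) \<Rightarrow> nat
                  \<Rightarrow> (nat \<Rightarrow> (hs set \<times> 'v \<Rightarrow>\<^sub>0 int) set) monoid" where
  "IV V A m = sum_group {..m} (\<lambda>n. Icomp V A n m)"

definition IVmor :: "(nat \<Rightarrow> 'v monoid) \<Rightarrow> (nat \<Rightarrow> hs \<Rightarrow> 'v \<Rightarrow> 'v) \<Rightarrow> nat \<Rightarrow> nat \<Rightarrow> hs set
                     \<Rightarrow> (nat \<Rightarrow> (hs set \<times> 'v \<Rightarrow>\<^sub>0 int) set) \<Rightarrow> (nat \<Rightarrow> (hs set \<times> 'v \<Rightarrow>\<^sub>0 int) set)" where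
  "IVmor V A m l g x = (\<lambda>n.
      if n \<le> m then
        qmap (tfree (FIhat n l) (V n)) (trel (FIhat n l) (firact n l) (hatS n) (V n) (A n))
             (frag_extend (\<lambda>(f, v). frag_of (ficomp n m l f g, v))) (x n)
      else if n \<le> l then \<one>\<^bsub>Icomp V A n l\<^esub>
      else undefined)"

text \<open>An hat FI-module is given by groups M n and maps F n m f for f in hat FI(n,m).
  The hat S_n-action is F n n [g]; the structure map M_k -> M_{k+1} is F k (k+1) [1].\<close>

definition mact :: "(nat \<Rightarrow> nat \<Rightarrow> hs set \<Rightarrow> 'a \<Rightarrow> 'a) \<Rightarrow> nat \<Rightarrow> hs \<Rightarrow> 'a \<Rightarrow> 'a" where
  "mact F n g = F n n (hcos n n g)"

definition iota :: "(nat \<Rightarrow> nat \<Rightarrow> hs set \<Rightarrow> 'a \<Rightarrow> 'a) \<Rightarrow> nat \<Rightarrow> 'a \<Rightarrow> 'a" where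
  "iota F k = F k (Suc k) (hcos (Suc k) k hone)"

text \<open>braidw b k = p(sigma_{k,k+1}^{-1} ... sigma_{1,2}^{-1}) where strand j (1-indexed)
  of the braid sits at position b + j - 1 (0-indexed); p(sigma_{j,j+1}^{-1}) = ((j j+1), -1).\<close>

fun braidw :: "nat \<Rightarrow> nat \<Rightarrow> hs" where
  "braidw b 0 = hone"
| "braidw b (Suc k) = hmul (transpose (b + k) (b + k + 1), -1) (braidw b k)"

text \<open>C_p(M)_n = Ind_{i_1 hat S_{n-p-1}}^{hat S_n} M_{n-p-1} (zero if n-p-1 < 0;
  C_{-1}(M)_n = Ind_{hat S_n}^{hat S_n} M_n, canonically M_n).\<close>

definition Cc :: "(nat \<Rightarrow> 'a monoid) \<Rightarrow> (nat \<Rightarrow> nat \<Rightarrow> hs set \<Rightarrow> 'a \<Rightarrow> 'a) \<Rightarrow> int \<Rightarrow> nat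
                  \<Rightarrow> (hs \<times> 'a \<Rightarrow>\<^sub>0 int) set monoid" where
  "Cc M F p n = (if p + 1 \<le> int n then
        (let k = nat (int n - p - 1) in tens (hatS n) hmul (hatS k) (M k) (mact F k))
      else tens {} hmul {} (M 0) (mact F 0))"

text \<open>Differential d_p = sum_{i=1}^{p+1} (-1)^i f_i : C_p -> C_{p-1}, where
  f_i (g (x) w) = g b_i (x) x_{n-p-1}(1 (x) w), b_i = p_n(braid on the last p+1 strands).\<close>

definition dmap :: "(nat \<Rightarrow> 'a monoid) \<Rightarrow> (nat \<Rightarrow> nat \<Rightarrow> hs set \<Rightarrow> 'a \<Rightarrow> 'a) \<Rightarrow> int \<Rightarrow> nat
                  \<Rightarrow> (hs \<times> 'a \<Rightarrow>\<^sub>0 int) set \<Rightarrow> (hs \<times> 'a \<Rightarrow>\<^sub>0 int) set" where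
  "dmap M F p n X = (if p + 1 \<le> int n then (let k = nat (int n - p - 1) in
     qmap (tfree (hatS n) (M (Suc k))) (trel (hatS n) hmul (hatS (Suc k)) (M (Suc k)) (mact F (Suc k)))
       (frag_extend (\<lambda>(g, w). \<Sum>i\<in>{1..nat (p + 1)}.
           frag_cmul ((-1) ^ i) (frag_of (hmul g (braidw k (i - 1)), iota F k w)))) X)
     else \<one>\<^bsub>Cc M F (p - 1) n\<^esub>)"

definition Hcs :: "(nat \<Rightarrow> 'a monoid) \<Rightarrow> (nat \<Rightarrow> nat \<Rightarrow> hs set \<Rightarrow> 'a \<Rightarrow> 'a) \<Rightarrow> int \<Rightarrow> nat
                   \<Rightarrow> (hs \<times> 'a \<Rightarrow>\<^sub>0 int) set set monoid" where
  "Hcs M F p n = (if p = -1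
      then Cc M F (-1) n Mod (dmap M F 0 n ` carrier (Cc M F 0 n))
      else (Cc M F p n)\<lparr>carrier := kernel (Cc M F p n) (Cc M F (p - 1) n) (dmap M F p n)\<rparr>
             Mod (dmap M F (p + 1) n ` carrier (Cc M F (p + 1) n)))"

definition Cact :: "(nat \<Rightarrow> 'a monoid) \<Rightarrow> (nat \<Rightarrow> nat \<Rightarrow> hs set \<Rightarrow> 'a \<Rightarrow> 'a) \<Rightarrow> int \<Rightarrow> nat \<Rightarrow> hs
                   \<Rightarrow> (hs \<times> 'a \<Rightarrow>\<^sub>0 int) set \<Rightarrow> (hs \<times> 'a \<Rightarrow>\<^sub>0 int) set" where
  "Cact M F p n g X = (let k = nat (int n - p - 1) in
     qmap (tfree (hatS n) (M k)) (trel (hatS n) hmul (hatS k) (M k) (mact F k))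
       (frag_extend (\<lambda>(h, w). frag_of (hmul g h, w))) X)"

definition Hact_m1 :: "(nat \<Rightarrow> 'a monoid) \<Rightarrow> (nat \<Rightarrow> nat \<Rightarrow> hs set \<Rightarrow> 'a \<Rightarrow> 'a) \<Rightarrow> nat \<Rightarrow> hs
                   \<Rightarrow> (hs \<times> 'a \<Rightarrow>\<^sub>0 int) set set \<Rightarrow> (hs \<times> 'a \<Rightarrow>\<^sub>0 int) set set" where
  "Hact_m1 M F n g Y = qmap (Cc M F (-1) n) (dmap M F 0 n ` carrier (Cc M F 0 n))
                          (Cact M F (-1) n g) Y"

end

theory Submission
  imports Defs
begin

text \<open>
  The group C_{-1}(I(V))_N is Z[hat S_N] (x) I(V)_N, and I(V)_N is the direct sum of
  the summands Z[hat FI(j,N)] (x) V_j for j <= N. Every morphism j -> N with j < N factors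
  through the standard morphism N-1 -> N, so d_0 reaches every generator g (x) (f (x) v) of a
  summand with j < N; on the other hand g (x) (f (x) v) |-> g f v kills the image of d_0,
  since the structure maps never reach the top summand j = N. Hence H_{-1} is the top summand
  Z[hat S_N] (x) Z[hat S_N] (x) V_N modulo the tensor relations, that is V_N.

  For H_0 we build rho from C_{-1} to C_0 / im d_1 with rho o d_0 equal to the projection, so
  that ker d_0 lies in im d_1. On a summand j < N, rho sends g (x) (s (x) v) to minus the class
  of g s (x) e_j(v), where e_j(v) is v placed in the standard summand j of I(V)_{N-1}. This does
  not depend on the representative s of [s] in hat FI(j,N): the class is invariant under right
  multiplication by i_2(hat S_{N-j}), which is generated by i_2 i_1(hat S_{N-j-1}), acting
  through the tensor relation, and by the lift tau of the last transposition, which acts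
  trivially modulo the image of d_1 = f_2 - f_1.
\<close>

section \<open>Quotient groups and free abelian groups\<close>

definition qlift :: "('a \<Rightarrow> 'b) \<Rightarrow> 'a set \<Rightarrow> 'b" where
  "qlift h Y = h (SOME a. a \<in> Y)"

lemma qmap_eq_qlift: "qmap G' T' h = qlift (\<lambda>a. T' #>\<^bsub>G'\<^esub> h a)"
  by (simp add: qmap_def qlift_def fun_eq_iff)

lemma group_homI: "group G \<Longrightarrow> group H \<Longrightarrow> h \<in> hom G H \<Longrightarrow> group_hom G H h"
  by (simp add: group_hom_def group_hom_axioms_def)

context normal
begin

lemma rcos_eq_iff:
  assumes "a \<in> carrier G" "b \<in> carrier G"
  shows "H #> a = H #> b \<longleftrightarrow> a \<otimes> inv b \<in> H"
proof
  assume "H #> a = H #> b"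
  then show "a \<otimes> inv b \<in> H"
    using rcos_self[OF assms(1) subgroup_axioms] rcos_module_imp[OF is_group assms(2)] by simp
next
  assume "a \<otimes> inv b \<in> H"
  then show "H #> a = H #> b"
    using rcos_module_rev[OF is_group assms(2,1)] repr_independence[OF _ assms(2) subgroup_axioms]
    by simp
qed

lemma some_in_rcos:
  assumes "a \<in> carrier G"
  shows "(SOME x. x \<in> H #> a) \<in> carrier G" and "H #> (SOME x. x \<in> H #> a) = H #> a"
proof -
  have "(SOME x. x \<in> H #> a) \<in> H #> a"
    using rcos_self[OF assms subgroup_axioms] by (rule someI)
  then show "(SOME x. x \<in> H #> a) \<in> carrier G" "H #> (SOME x. x \<in> H #> a) = H #> a"
    using elemrcos_carrier[OF is_group assms] repr_independence[OF _ assms subgroup_axioms] by auto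
qed

lemma qlift_rcos:
  assumes K: "group K" and h: "h \<in> hom G K" and kill: "\<And>t. t \<in> H \<Longrightarrow> h t = \<one>\<^bsub>K\<^esub>"
    and a: "a \<in> carrier G"
  shows "qlift h (H #> a) = h a"
proof -
  interpret h: group_hom G K h using group_homI[OF is_group K h] .
  let ?x = "SOME x. x \<in> H #> a"
  have x: "?x \<in> carrier G" "?x \<otimes> inv a \<in> H"
    using some_in_rcos[OF a] rcos_eq_iff[OF _ a] by auto
  then have "h (?x \<otimes> inv a) = \<one>\<^bsub>K\<^esub>" using kill by blast
  then have "h ?x \<otimes>\<^bsub>K\<^esub> inv\<^bsub>K\<^esub> h a = \<one>\<^bsub>K\<^esub>" using x(1) a by simp
  then show ?thesis
    unfolding qlift_def using x(1) a by (metis h.H.inv_equality h.H.inv_inv h.H.inv_closed h.hom_closed)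
qed

lemma qlift_hom:
  assumes K: "group K" and h: "h \<in> hom G K" and kill: "\<And>t. t \<in> H \<Longrightarrow> h t = \<one>\<^bsub>K\<^esub>"
  shows "qlift h \<in> hom (G Mod H) K"
proof (rule homI)
  fix X assume "X \<in> carrier (G Mod H)"
  then obtain a where "a \<in> carrier G" "X = H #> a" by (auto simp: carrier_FactGroup)
  then show "qlift h X \<in> carrier K" using qlift_rcos[OF assms] h by (simp add: hom_in_carrier)
next
  fix X Y assume "X \<in> carrier (G Mod H)" "Y \<in> carrier (G Mod H)"
  then obtain a b where "a \<in> carrier G" "X = H #> a" "b \<in> carrier G" "Y = H #> b"
    by (auto simp: carrier_FactGroup)
  then show "qlift h (X \<otimes>\<^bsub>G Mod H\<^esub> Y) = qlift h X \<otimes>\<^bsub>K\<^esub> qlift h Y"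
    using qlift_rcos[OF assms] h by (simp add: rcos_sum hom_mult)
qed

end

lemma rcos_hom_kills:
  assumes "T' \<lhd> G'" "h ` T \<subseteq> T'" "t \<in> T"
  shows "T' #>\<^bsub>G'\<^esub> h t = \<one>\<^bsub>G' Mod T'\<^esub>"
  using assms group.coset_join2[of G' "h t" T'] normal.axioms[OF assms(1)] subgroup.mem_carrier
  by fastforce

lemma rcos_comp_hom:
  assumes "T' \<lhd> G'" "h \<in> hom G G'"
  shows "(\<lambda>a. T' #>\<^bsub>G'\<^esub> h a) \<in> hom G (G' Mod T')"
  using hom_compose[OF assms(2) normal.r_coset_hom_Mod[OF assms(1)]] by (simp add: comp_def)

lemma qmap_rcos:
  assumes "T \<lhd> G" "T' \<lhd> G'" "h \<in> hom G G'" "h ` T \<subseteq> T'" "a \<in> carrier G"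
  shows "qmap G' T' h (T #>\<^bsub>G\<^esub> a) = T' #>\<^bsub>G'\<^esub> h a"
  unfolding qmap_eq_qlift
  using normal.qlift_rcos[OF assms(1) normal.factorgroup_is_group[OF assms(2)]
      rcos_comp_hom[OF assms(2,3)] rcos_hom_kills[OF assms(2,4)] assms(5)] .

lemma qmap_hom:
  assumes "T \<lhd> G" "T' \<lhd> G'" "h \<in> hom G G'" "h ` T \<subseteq> T'"
  shows "qmap G' T' h \<in> hom (G Mod T) (G' Mod T')"
  unfolding qmap_eq_qlift
  using normal.qlift_hom[OF assms(1) normal.factorgroup_is_group[OF assms(2)]
      rcos_comp_hom[OF assms(2,3)] rcos_hom_kills[OF assms(2,4)]] .

lemma free_Abelian_group_hom_eqI:
  assumes "group H" "h1 \<in> hom (free_Abelian_group S) H" "h2 \<in> hom (free_Abelian_group S) H"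
    and "\<And>s. s \<in> S \<Longrightarrow> h1 (frag_of s) = h2 (frag_of s)"
    and "Poly_Mapping.keys x \<subseteq> S"
  shows "h1 x = h2 x"
proof -
  interpret h1: group_hom "free_Abelian_group S" H h1
    using group_homI[OF group_free_Abelian_group assms(1,2)] .
  interpret h2: group_hom "free_Abelian_group S" H h2
    using group_homI[OF group_free_Abelian_group assms(1,3)] .
  show ?thesis
  proof (rule free_Abelian_group_induct[OF assms(5)])
    fix x y assume "Poly_Mapping.keys x \<subseteq> S" "Poly_Mapping.keys y \<subseteq> S" "h1 x = h2 x" "h1 y = h2 y"
    then show "h1 (x - y) = h2 (x - y)"
      using h1.hom_mult[of x "- y"] h2.hom_mult[of x "- y"] h1.hom_inv[of y] h2.hom_inv[of y] by simp
  qed (use assms(4) h1.hom_one h2.hom_one in auto)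
qed

lemma free_Abelian_group_hom_diff:
  assumes "group H" "h \<in> hom (free_Abelian_group S) H"
    and "Poly_Mapping.keys a \<subseteq> S" "Poly_Mapping.keys b \<subseteq> S"
  shows "h (a - b) = h a \<otimes>\<^bsub>H\<^esub> inv\<^bsub>H\<^esub> h b"
proof -
  interpret h: group_hom "free_Abelian_group S" H h
    using group_homI[OF group_free_Abelian_group assms(1,2)] .
  show ?thesis using h.hom_mult[of a "- b"] h.hom_inv[of b] assms(3,4) by simp
qed

lemma frag_extend_hom:
  assumes "\<And>s. s \<in> S \<Longrightarrow> Poly_Mapping.keys (f s) \<subseteq> S'"
  shows "frag_extend f \<in> hom (free_Abelian_group S) (free_Abelian_group S')"
proof (rule homI)
  fix x assume "x \<in> carrier (free_Abelian_group S)"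
  then show "frag_extend f x \<in> carrier (free_Abelian_group S')"
    using keys_frag_extend[of f x] assms by auto
qed (simp add: frag_extend_add)

definition free_lift :: "('b, 'c) monoid_scheme \<Rightarrow> ('a \<Rightarrow> 'b) \<Rightarrow> 'a set \<Rightarrow> ('a \<Rightarrow>\<^sub>0 int) \<Rightarrow> 'b" where
  "free_lift H f S = (SOME h. h \<in> hom (free_Abelian_group S) H \<and> (\<forall>x\<in>S. h (frag_of x) = f x))"

lemma free_lift:
  assumes "comm_group H" "f ` S \<subseteq> carrier H"
  shows "free_lift H f S \<in> hom (free_Abelian_group S) H"
    and "\<And>x. x \<in> S \<Longrightarrow> free_lift H f S (frag_of x) = f x"
proof -
  have "\<exists>h. h \<in> hom (free_Abelian_group S) H \<and> (\<forall>x\<in>S. h (frag_of x) = f x)"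
    using comm_group.free_Abelian_group_universal[OF assms] by metis
  then have "free_lift H f S \<in> hom (free_Abelian_group S) H \<and> (\<forall>x\<in>S. free_lift H f S (frag_of x) = f x)"
    unfolding free_lift_def by (rule someI_ex)
  then show "free_lift H f S \<in> hom (free_Abelian_group S) H"
    and "\<And>x. x \<in> S \<Longrightarrow> free_lift H f S (frag_of x) = f x" by auto
qed

lemma hom_kills_generate:
  assumes "group G" "group H" "h \<in> hom G H" "R \<subseteq> carrier G"
    and "\<And>r. r \<in> R \<Longrightarrow> h r = \<one>\<^bsub>H\<^esub>" and "t \<in> generate G R"
  shows "h t = \<one>\<^bsub>H\<^esub>"
proof -
  interpret h: group_hom G H h using group_homI[OF assms(1-3)] .
  have "R \<subseteq> kernel G H h" using assms(4,5) by (auto simp: kernel_def)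
  then have "generate G R \<subseteq> kernel G H h" using h.G.generate_subgroup_incl h.subgroup_kernel by blast
  then show ?thesis using assms(6) by (auto simp: kernel_def)
qed

lemma hom_image_generate:
  assumes "group G" "group H" "h \<in> hom G H" "R \<subseteq> carrier G" "R' \<subseteq> carrier H"
    and "h ` R \<subseteq> generate H R'"
  shows "h ` generate G R \<subseteq> generate H R'"
proof -
  interpret h: group_hom G H h using group_homI[OF assms(1-3)] .
  show ?thesis
    using h.generate_img[OF assms(4)] h.H.generate_subgroup_incl[OF assms(6) h.H.generate_is_subgroup[OF assms(5)]]
    by simp
qed

section \<open>Tensor products\<close>

definition tens_wf :: "'x set \<Rightarrow> ('x \<Rightarrow> hs \<Rightarrow> 'x) \<Rightarrow> hs set \<Rightarrow> 'w monoid \<Rightarrow> (hs \<Rightarrow> 'w \<Rightarrow> 'w) \<Rightarrow> bool" where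
  "tens_wf X rho K W B \<longleftrightarrow> comm_group W \<and> (\<forall>x\<in>X. \<forall>k\<in>K. rho x k \<in> X)
     \<and> (\<forall>k\<in>K. \<forall>w\<in>carrier W. B k w \<in> carrier W)"

abbreviation tclass :: "'x set \<Rightarrow> ('x \<Rightarrow> hs \<Rightarrow> 'x) \<Rightarrow> hs set \<Rightarrow> 'w monoid \<Rightarrow> (hs \<Rightarrow> 'w \<Rightarrow> 'w)
    \<Rightarrow> ('x \<times> 'w \<Rightarrow>\<^sub>0 int) \<Rightarrow> ('x \<times> 'w \<Rightarrow>\<^sub>0 int) set" where
  "tclass X rho K W B a \<equiv> trel X rho K W B #>\<^bsub>tfree X W\<^esub> a"

lemma tfree_comm_group: "comm_group (tfree X W)"
  by (simp add: tfree_def abelian_free_Abelian_group)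

lemma tfree_group: "group (tfree X W)"
  by (simp add: tfree_def)

lemma tfree_carrier: "a \<in> carrier (tfree X W) \<longleftrightarrow> Poly_Mapping.keys a \<subseteq> X \<times> carrier W"
  by (simp add: tfree_def)

lemma tfree_simps [simp]:
  "a \<otimes>\<^bsub>tfree X W\<^esub> b = a + b" "\<one>\<^bsub>tfree X W\<^esub> = 0"
  "a \<in> carrier (tfree X W) \<Longrightarrow> inv\<^bsub>tfree X W\<^esub> a = - a"
  "frag_of (x, w) \<in> carrier (tfree X W) \<longleftrightarrow> x \<in> X \<and> w \<in> carrier W"
  by (simp_all add: tfree_def)

lemma tfree_closed [intro]:
  "a \<in> carrier (tfree X W) \<Longrightarrow> b \<in> carrier (tfree X W) \<Longrightarrow> a + b \<in> carrier (tfree X W)"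
  "a \<in> carrier (tfree X W) \<Longrightarrow> b \<in> carrier (tfree X W) \<Longrightarrow> a - b \<in> carrier (tfree X W)"
  "a \<in> carrier (tfree X W) \<Longrightarrow> - a \<in> carrier (tfree X W)"
  "0 \<in> carrier (tfree X W)"
  unfolding tfree_carrier using keys_add[of a b] keys_diff[of a b] by auto

lemma frel_subset:
  assumes "tens_wf X rho K W B"
  shows "frel X rho K W B \<subseteq> carrier (tfree X W)"
proof -
  interpret W: comm_group W using assms by (simp add: tens_wf_def)
  show ?thesis using assms unfolding frel_def tens_wf_def by (auto intro!: tfree_closed)
qed

lemma trel_subgroup:
  assumes "tens_wf X rho K W B"
  shows "subgroup (trel X rho K W B) (tfree X W)"
  unfolding trel_def using group.generate_is_subgroup[OF tfree_group frel_subset[OF assms]] .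

lemma trel_normal:
  assumes "tens_wf X rho K W B"
  shows "trel X rho K W B \<lhd> tfree X W"
  using comm_group.subgroup_imp_normal[OF tfree_comm_group trel_subgroup[OF assms]] .

lemma frel_in_trel: "r \<in> frel X rho K W B \<Longrightarrow> r \<in> trel X rho K W B"
  by (simp add: trel_def generate.incl)

lemma trel_add:
  assumes "tens_wf X rho K W B" "r \<in> trel X rho K W B" "r' \<in> trel X rho K W B"
  shows "r + r' \<in> trel X rho K W B"
  using subgroup.m_closed[OF trel_subgroup[OF assms(1)] assms(2,3)] by simp

lemma trel_neg:
  assumes "tens_wf X rho K W B" "r \<in> trel X rho K W B"
  shows "- r \<in> trel X rho K W B"
  using subgroup.m_inv_closed[OF trel_subgroup[OF assms(1)] assms(2)]
    subgroup.mem_carrier[OF trel_subgroup[OF assms(1)] assms(2)] by simp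

lemma trel_diff:
  assumes "tens_wf X rho K W B" "r \<in> trel X rho K W B" "r' \<in> trel X rho K W B"
  shows "r - r' \<in> trel X rho K W B"
  using trel_add[OF assms(1,2) trel_neg[OF assms(1,3)]] by simp

lemma tens_comm_group:
  assumes "tens_wf X rho K W B"
  shows "comm_group (tens X rho K W B)"
  unfolding tens_def
  using comm_group.abelian_FactGroup[OF tfree_comm_group trel_subgroup[OF assms]] .

lemma tens_group:
  assumes "tens_wf X rho K W B"
  shows "group (tens X rho K W B)"
  using tens_comm_group[OF assms] comm_group.axioms(2) by blast

lemma tens_carrier:
  "carrier (tens X rho K W B) = tclass X rho K W B ` carrier (tfree X W)"
  by (simp add: tens_def carrier_FactGroup)

lemma tclass_in_carrier:
  "a \<in> carrier (tfree X W) \<Longrightarrow> tclass X rho K W B a \<in> carrier (tens X rho K W B)"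
  by (simp add: tens_carrier)

lemma tens_one:
  assumes "tens_wf X rho K W B"
  shows "\<one>\<^bsub>tens X rho K W B\<^esub> = tclass X rho K W B 0"
  using group.coset_join2[OF tfree_group tfree_closed(4) trel_subgroup[OF assms]]
    subgroup.one_closed[OF trel_subgroup[OF assms]] by (simp add: tens_def)

lemma tens_mult:
  assumes "tens_wf X rho K W B" "a \<in> carrier (tfree X W)" "b \<in> carrier (tfree X W)"
  shows "tclass X rho K W B a \<otimes>\<^bsub>tens X rho K W B\<^esub> tclass X rho K W B b = tclass X rho K W B (a + b)"
  using normal.rcos_sum[OF trel_normal[OF assms(1)] assms(2,3)] by (simp add: tens_def)

lemma tens_inv:
  assumes "tens_wf X rho K W B" "a \<in> carrier (tfree X W)"
  shows "inv\<^bsub>tens X rho K W B\<^esub> tclass X rho K W B a = tclass X rho K W B (- a)"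
proof -
  interpret T: group "tens X rho K W B" using tens_group[OF assms(1)] .
  show ?thesis
    using tens_mult[OF assms(1) tfree_closed(3)[OF assms(2)] assms(2)] tens_one[OF assms(1)]
      tclass_in_carrier assms(2) tfree_closed(3)[OF assms(2)] by (intro T.inv_equality) auto
qed

lemma tclass_eq_iff:
  assumes "tens_wf X rho K W B" "a \<in> carrier (tfree X W)" "b \<in> carrier (tfree X W)"
  shows "tclass X rho K W B a = tclass X rho K W B b \<longleftrightarrow> a - b \<in> trel X rho K W B"
  using normal.rcos_eq_iff[OF trel_normal[OF assms(1)] assms(2,3)] assms(3) by simp

lemma tclass_act:
  assumes "tens_wf X rho K W B" "x \<in> X" "k \<in> K" "w \<in> carrier W"
  shows "tclass X rho K W B (frag_of (rho x k, w)) = tclass X rho K W B (frag_of (x, B k w))"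
proof -
  have "frag_of (rho x k, w) - frag_of (x, B k w) \<in> frel X rho K W B"
    unfolding frel_def using assms(2-4) by blast
  then show ?thesis
    using assms by (simp add: tclass_eq_iff frel_in_trel tens_wf_def)
qed

lemma tclass_mult_right:
  assumes "tens_wf X rho K W B" "x \<in> X" "w \<in> carrier W" "w' \<in> carrier W"
  shows "tclass X rho K W B (frag_of (x, w \<otimes>\<^bsub>W\<^esub> w'))
       = tclass X rho K W B (frag_of (x, w) + frag_of (x, w'))"
proof -
  interpret W: comm_group W using assms by (simp add: tens_wf_def)
  have "frag_of (x, w \<otimes>\<^bsub>W\<^esub> w') - (frag_of (x, w) + frag_of (x, w')) \<in> frel X rho K W B"
    unfolding frel_def using assms by (auto simp: diff_diff_eq)
  then show ?thesis using assms by (subst tclass_eq_iff) (auto simp: frel_in_trel)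
qed

lemma tensor_hom:
  assumes "tens_wf X rho K W B" "x \<in> X"
  shows "(\<lambda>w. tclass X rho K W B (frag_of (x, w))) \<in> hom W (tens X rho K W B)"
proof -
  interpret W: comm_group W using assms by (simp add: tens_wf_def)
  show ?thesis
  proof (rule homI)
    fix w assume "w \<in> carrier W"
    then show "tclass X rho K W B (frag_of (x, w)) \<in> carrier (tens X rho K W B)"
      using assms(2) by (simp add: tclass_in_carrier)
  next
    fix w w' assume "w \<in> carrier W" "w' \<in> carrier W"
    then show "tclass X rho K W B (frag_of (x, w \<otimes>\<^bsub>W\<^esub> w'))
        = tclass X rho K W B (frag_of (x, w)) \<otimes>\<^bsub>tens X rho K W B\<^esub> tclass X rho K W B (frag_of (x, w'))"
      using assms tclass_mult_right[OF assms] tens_mult[OF assms(1)] by simp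
  qed
qed

definition tlift :: "('b, 'c) monoid_scheme \<Rightarrow> ('x \<times> 'w \<Rightarrow> 'b) \<Rightarrow> 'x set \<Rightarrow> 'w monoid
    \<Rightarrow> ('x \<times> 'w \<Rightarrow>\<^sub>0 int) set \<Rightarrow> 'b" where
  "tlift H f X W = qlift (free_lift H f (X \<times> carrier W))"

context
  fixes X rho K W B H f
  assumes wf: "tens_wf X rho K W B" and H: "comm_group H"
    and f_closed: "\<And>x w. x \<in> X \<Longrightarrow> w \<in> carrier W \<Longrightarrow> f (x, w) \<in> carrier H"
    and f_act: "\<And>x k w. x \<in> X \<Longrightarrow> k \<in> K \<Longrightarrow> w \<in> carrier W \<Longrightarrow> f (rho x k, w) = f (x, B k w)"
    and f_mult: "\<And>x w w'. x \<in> X \<Longrightarrow> w \<in> carrier W \<Longrightarrow> w' \<in> carrier W \<Longrightarrow>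
                   f (x, w \<otimes>\<^bsub>W\<^esub> w') = f (x, w) \<otimes>\<^bsub>H\<^esub> f (x, w')"
begin

private lemma free_lift_props:
  shows "free_lift H f (X \<times> carrier W) \<in> hom (tfree X W) H"
    and "\<And>x w. x \<in> X \<Longrightarrow> w \<in> carrier W \<Longrightarrow> free_lift H f (X \<times> carrier W) (frag_of (x, w)) = f (x, w)"
    and "\<And>t. t \<in> trel X rho K W B \<Longrightarrow> free_lift H f (X \<times> carrier W) t = \<one>\<^bsub>H\<^esub>"
proof -
  interpret W: comm_group W using wf by (simp add: tens_wf_def)
  interpret H: comm_group H by (rule H)
  let ?h = "free_lift H f (X \<times> carrier W)"
  have f: "f ` (X \<times> carrier W) \<subseteq> carrier H" using f_closed by auto
  show h: "?h \<in> hom (tfree X W) H" using free_lift(1)[OF H f] by (simp add: tfree_def)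
  show hf: "\<And>x w. x \<in> X \<Longrightarrow> w \<in> carrier W \<Longrightarrow> ?h (frag_of (x, w)) = f (x, w)"
    using free_lift(2)[OF H f] by simp
  have diff: "?h (a - b) = ?h a \<otimes>\<^bsub>H\<^esub> inv\<^bsub>H\<^esub> ?h b"
    if "a \<in> carrier (tfree X W)" "b \<in> carrier (tfree X W)" for a b
    using free_Abelian_group_hom_diff[OF H.is_group h[unfolded tfree_def]] that
    by (simp add: tfree_carrier)
  have "?h r = \<one>\<^bsub>H\<^esub>" if "r \<in> frel X rho K W B" for r
    using that unfolding frel_def
  proof (elim UnE CollectE exE conjE)
    fix x k w assume r: "r = frag_of (rho x k, w) - frag_of (x, B k w)" "x \<in> X" "k \<in> K" "w \<in> carrier W"
    then have "rho x k \<in> X" "B k w \<in> carrier W" using wf by (auto simp: tens_wf_def)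
    then show "?h r = \<one>\<^bsub>H\<^esub>" using r by (simp add: diff hf f_act f_closed)
  next
    fix x w w' assume r: "r = frag_of (x, w \<otimes>\<^bsub>W\<^esub> w') - frag_of (x, w) - frag_of (x, w')"
      "x \<in> X" "w \<in> carrier W" "w' \<in> carrier W"
    have c: "frag_of (x, w \<otimes>\<^bsub>W\<^esub> w') \<in> carrier (tfree X W)" "frag_of (x, w) \<in> carrier (tfree X W)"
      "frag_of (x, w') \<in> carrier (tfree X W)" using r by simp_all
    have "?h r = (f (x, w) \<otimes>\<^bsub>H\<^esub> f (x, w')) \<otimes>\<^bsub>H\<^esub> inv\<^bsub>H\<^esub> f (x, w) \<otimes>\<^bsub>H\<^esub> inv\<^bsub>H\<^esub> f (x, w')"
      using r diff[OF tfree_closed(2)[OF c(1,2)] c(3)] diff[OF c(1,2)] by (simp add: hf f_mult)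
    also have "\<dots> = \<one>\<^bsub>H\<^esub>"
      using r f_closed by (simp add: H.m_assoc H.m_lcomm H.r_inv)
    finally show "?h r = \<one>\<^bsub>H\<^esub>" .
  qed
  then show "\<And>t. t \<in> trel X rho K W B \<Longrightarrow> ?h t = \<one>\<^bsub>H\<^esub>"
    unfolding trel_def using hom_kills_generate[OF tfree_group H.is_group h frel_subset[OF wf]] by blast
qed

lemma tlift_hom: "tlift H f X W \<in> hom (tens X rho K W B) H"
  unfolding tlift_def tens_def
  using normal.qlift_hom[OF trel_normal[OF wf] comm_group.axioms(2)[OF H] free_lift_props(1,3)] .

lemma tlift_tensor:
  assumes "x \<in> X" "w \<in> carrier W"
  shows "tlift H f X W (tclass X rho K W B (frag_of (x, w))) = f (x, w)"
  unfolding tlift_def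
  using normal.qlift_rcos[OF trel_normal[OF wf] comm_group.axioms(2)[OF H] free_lift_props(1,3)]
    free_lift_props(2) assms by simp

end

lemma tens_hom_eqI:
  assumes wf: "tens_wf X rho K W B" and H: "group H"
    and h1: "h1 \<in> hom (tens X rho K W B) H" and h2: "h2 \<in> hom (tens X rho K W B) H"
    and eq: "\<And>x w. x \<in> X \<Longrightarrow> w \<in> carrier W \<Longrightarrow>
        h1 (tclass X rho K W B (frag_of (x, w))) = h2 (tclass X rho K W B (frag_of (x, w)))"
    and Y: "Y \<in> carrier (tens X rho K W B)"
  shows "h1 Y = h2 Y"
proof -
  obtain a where a: "a \<in> carrier (tfree X W)" "Y = tclass X rho K W B a"
    using Y by (auto simp: tens_carrier)
  have p: "tclass X rho K W B \<in> hom (tfree X W) (tens X rho K W B)"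
    unfolding tens_def using normal.r_coset_hom_Mod[OF trel_normal[OF wf]] .
  have "(h1 \<circ> tclass X rho K W B) a = (h2 \<circ> tclass X rho K W B) a"
  proof (rule free_Abelian_group_hom_eqI[OF H])
    show "h1 \<circ> tclass X rho K W B \<in> hom (free_Abelian_group (X \<times> carrier W)) H"
      "h2 \<circ> tclass X rho K W B \<in> hom (free_Abelian_group (X \<times> carrier W)) H"
      using hom_compose[OF p h1] hom_compose[OF p h2] by (simp_all add: tfree_def)
    show "Poly_Mapping.keys a \<subseteq> X \<times> carrier W" using a(1) by (simp add: tfree_carrier)
  qed (use eq in auto)
  then show ?thesis using a by simp
qed

context
  fixes X rho K W B X' rho' K' W' B' phi
  assumes wf: "tens_wf X rho K W B" and wf': "tens_wf X' rho' K' W' B'"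
    and phi_closed: "\<And>x w. x \<in> X \<Longrightarrow> w \<in> carrier W \<Longrightarrow> phi (x, w) \<in> carrier (tfree X' W')"
    and phi_act: "\<And>x k w. x \<in> X \<Longrightarrow> k \<in> K \<Longrightarrow> w \<in> carrier W \<Longrightarrow>
         phi (rho x k, w) - phi (x, B k w) \<in> trel X' rho' K' W' B'"
    and phi_mult: "\<And>x w w'. x \<in> X \<Longrightarrow> w \<in> carrier W \<Longrightarrow> w' \<in> carrier W \<Longrightarrow>
         phi (x, w \<otimes>\<^bsub>W\<^esub> w') - phi (x, w) - phi (x, w') \<in> trel X' rho' K' W' B'"
begin

lemma frag_extend_tfree_hom: "frag_extend phi \<in> hom (tfree X W) (tfree X' W')"
  unfolding tfree_def by (rule frag_extend_hom) (use phi_closed in \<open>auto simp: tfree_carrier\<close>)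

private lemma frag_extend_trel: "frag_extend phi ` trel X rho K W B \<subseteq> trel X' rho' K' W' B'"
proof -
  have "frag_extend phi r \<in> trel X' rho' K' W' B'" if "r \<in> frel X rho K W B" for r
    using that unfolding frel_def
  proof (elim UnE CollectE exE conjE)
    fix x k w assume "r = frag_of (rho x k, w) - frag_of (x, B k w)" "x \<in> X" "k \<in> K" "w \<in> carrier W"
    then show ?thesis using phi_act by (simp add: frag_extend_diff)
  next
    fix x w w' assume "r = frag_of (x, w \<otimes>\<^bsub>W\<^esub> w') - frag_of (x, w) - frag_of (x, w')"
      "x \<in> X" "w \<in> carrier W" "w' \<in> carrier W"
    then show ?thesis using phi_mult by (simp add: frag_extend_diff)
  qed
  then show ?thesis
    using hom_image_generate[OF tfree_group tfree_group frag_extend_tfree_hom frel_subset[OF wf]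
        frel_subset[OF wf']]
    unfolding trel_def by (simp add: image_subset_iff)
qed

lemma tens_map_hom:
  "qmap (tfree X' W') (trel X' rho' K' W' B') (frag_extend phi)
     \<in> hom (tens X rho K W B) (tens X' rho' K' W' B')"
  unfolding tens_def
  using qmap_hom[OF trel_normal[OF wf] trel_normal[OF wf'] frag_extend_tfree_hom frag_extend_trel] .

lemma tens_map_tclass:
  assumes "a \<in> carrier (tfree X W)"
  shows "qmap (tfree X' W') (trel X' rho' K' W' B') (frag_extend phi) (tclass X rho K W B a)
       = tclass X' rho' K' W' B' (frag_extend phi a)"
  using qmap_rcos[OF trel_normal[OF wf] trel_normal[OF wf'] frag_extend_tfree_hom frag_extend_trel assms] .

end

section \<open>The groups hat S_n\<close>

lemma permutes_lessThan_permutation: "s permutes {..<(n::nat)} \<Longrightarrow> permutation s"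
  using permutes_imp_permutation[OF finite_lessThan] .

lemma hatS_perm: "x \<in> hatS n \<Longrightarrow> fst x permutes {..<n}"
  by (cases x) (simp add: hatS_def)

lemma permutes_lessThan_1: "s permutes {..<Suc 0} \<longleftrightarrow> s = id"
proof -
  have "{..<Suc 0} = {0}" by auto
  then show ?thesis by simp
qed

lemma hatS_small: "n < 2 \<Longrightarrow> hatS n = {hone}"
proof -
  assume "n < 2"
  then have "n = 0 \<or> n = 1" by auto
  then show ?thesis by (auto simp: hatS_def hone_def permutes_lessThan_1 permutes_id)
qed

lemma hone_in_hatS [simp]: "hone \<in> hatS n"
  by (simp add: hatS_def hone_def permutes_id)

lemma hmul_assoc: "hmul (hmul x y) z = hmul x (hmul y z)"
  by (simp add: hmul_def comp_assoc add.assoc)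

lemma hmul_hone [simp]: "hmul x hone = x" "hmul hone x = x"
  by (simp_all add: hmul_def hone_def)

lemma hmul_closed:
  assumes "x \<in> hatS n" "y \<in> hatS n"
  shows "hmul x y \<in> hatS n"
proof -
  obtain s d t e where x: "x = (s, d)" and y: "y = (t, e)" by fastforce
  have p: "s permutes {..<n}" "t permutes {..<n}" using assms x y by (auto simp: hatS_def)
  have "sign (s \<circ> t) = sign s * sign t"
    using sign_compose permutes_lessThan_permutation p by blast
  moreover have "sign s = 1 \<or> sign s = -1" "sign t = 1 \<or> sign t = -1"
    by (cases s rule: sign_cases; simp) (cases t rule: sign_cases; simp)
  ultimately show ?thesis using assms x y p by (auto simp: hatS_def hmul_def permutes_compose)
qed

definition hinv :: "hs \<Rightarrow> hs" where
  "hinv x = (inv_into UNIV (fst x), - snd x)"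

lemma hinv_closed:
  assumes "x \<in> hatS n" shows "hinv x \<in> hatS n"
proof -
  obtain s d where x: "x = (s, d)" by fastforce
  have p: "s permutes {..<n}" using assms x by (auto simp: hatS_def)
  have "sign (inv_into UNIV s) = sign s" using sign_inverse permutes_lessThan_permutation p by blast
  then show ?thesis using assms x p by (auto simp: hatS_def hinv_def permutes_inv)
qed

lemma hmul_hinv: "x \<in> hatS n \<Longrightarrow> hmul (hinv x) x = hone"
  by (cases x) (auto simp: hatS_def hinv_def hmul_def hone_def permutes_inv_o)

lemma hatSgrp_simps [simp]:
  "carrier (hatSgrp n) = hatS n" "monoid.mult (hatSgrp n) = hmul" "one (hatSgrp n) = hone"
  by (simp_all add: hatSgrp_def)

lemma group_hatSgrp: "group (hatSgrp n)"
proof (rule groupI)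
  show "\<exists>y\<in>carrier (hatSgrp n). y \<otimes>\<^bsub>hatSgrp n\<^esub> x = \<one>\<^bsub>hatSgrp n\<^esub>" if "x \<in> carrier (hatSgrp n)" for x
    using that hinv_closed hmul_hinv by fastforce
qed (simp_all add: hmul_closed hmul_assoc)

lemma hatSgrp_inv: "x \<in> hatS n \<Longrightarrow> inv\<^bsub>hatSgrp n\<^esub> x = hinv x"
  by (rule group.inv_equality[OF group_hatSgrp]) (simp_all add: hmul_hinv hinv_closed)

lemma hatS_mono:
  assumes "j \<le> n" shows "hatS j \<subseteq> hatS n"
proof
  fix x assume x: "x \<in> hatS j"
  show "x \<in> hatS n"
  proof (cases "2 \<le> j")
    case True
    then show ?thesis
      using x assms permutes_subset[of "fst x" "{..<j}" "{..<n}"] by (cases x) (auto simp: hatS_def)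
  next
    case False
    then show ?thesis using hatS_small x by auto
  qed
qed

definition shiftp :: "nat \<Rightarrow> (nat \<Rightarrow> nat) \<Rightarrow> nat \<Rightarrow> nat" where
  "shiftp c s = (\<lambda>i. if c \<le> i then s (i - c) + c else i)"

lemma shiftp_comp: "shiftp c (s \<circ> t) = shiftp c s \<circ> shiftp c t"
  by (auto simp: shiftp_def fun_eq_iff)

lemma shiftp_shiftp: "shiftp c (shiftp c' s) = shiftp (c + c') s"
  by (auto simp: shiftp_def fun_eq_iff)

lemma shiftp_transpose: "shiftp c (transpose a b) = transpose (a + c) (b + c)"
  by (auto simp: shiftp_def fun_eq_iff transpose_def)

lemma shiftp_permutes:
  assumes "s permutes {..<l}" "c + l \<le> m"
  shows "shiftp c s permutes {..<m}"
proof -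
  have "shiftp c (inv_into UNIV s) \<circ> shiftp c s = id" "shiftp c s \<circ> shiftp c (inv_into UNIV s) = id"
    using permutes_inv_o[OF assms(1)] by (simp_all add: shiftp_def fun_eq_iff flip: shiftp_comp)
  then have "\<forall>y. \<exists>!x. shiftp c s x = y" by (metis bij_def comp_eq_id_dest o_bij bij_pointE)
  moreover have "shiftp c s i = i" if "i \<notin> {..<m}" for i
    using that assms permutes_not_in[OF assms(1), of "i - c"] by (auto simp: shiftp_def)
  ultimately show ?thesis by (simp add: permutes_def)
qed

lemma sign_shiftp:
  assumes "s permutes {..<l}"
  shows "sign (shiftp c s) = sign s"
  using assms finite_lessThan[of l]
proof (induction rule: permutes_induct)
  case id
  have "shiftp c id = id" by (auto simp: shiftp_def)
  then show ?case by (simp add: id_def)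
next
  case (swap a b p)
  have "permutation p" "permutation (shiftp c p)"
    using swap shiftp_permutes[OF \<open>p permutes {..<l}\<close>, of c "c + l"] permutes_lessThan_permutation
    by auto
  have "sign (shiftp c (transpose a b \<circ> p)) = sign (transpose (a + c) (b + c)) * sign (shiftp c p)"
    by (simp only: shiftp_comp shiftp_transpose sign_compose[OF permutation_swap_id \<open>permutation (shiftp c p)\<close>])
  also have "\<dots> = sign (transpose a b \<circ> p)"
    using swap by (simp add: sign_swap_id sign_compose[OF permutation_swap_id \<open>permutation p\<close>])
  finally show ?case .
qed

lemma shiftp_commute:
  assumes "t permutes {..<c}"
  shows "shiftp c s \<circ> t = t \<circ> shiftp c s"
proof
  fix i
  show "(shiftp c s \<circ> t) i = (t \<circ> shiftp c s) i"
  proof (cases "c \<le> i")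
    case True
    then show ?thesis using permutes_not_in[OF assms] by (simp add: shiftp_def)
  next
    case False
    then have "t i < c" using permutes_in_image[OF assms] by auto
    then show ?thesis using False by (simp add: shiftp_def)
  qed
qed

lemma i2_eq_shiftp:
  assumes "l \<le> m" "fst x permutes {..<l}"
  shows "i2 m l x = (shiftp (m - l) (fst x), snd x)"
proof -
  have "fst x (i - (m - l)) = i - (m - l)" if "m \<le> i" for i
    using permutes_not_in[OF assms(2)] that assms(1) by auto
  then show ?thesis by (auto simp: i2_def shiftp_def fun_eq_iff)
qed

lemma i2_hone [simp]: "i2 m l hone = hone"
  by (simp add: i2_def hone_def fun_eq_iff)

lemma i2_in_hatS:
  assumes "l \<le> m" "x \<in> hatS l"
  shows "i2 m l x \<in> hatS m"
proof (cases "2 \<le> l")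
  case True
  obtain s d where x: "x = (s, d)" by fastforce
  have p: "s permutes {..<l}" using assms x by (simp add: hatS_def)
  then show ?thesis
    using i2_eq_shiftp[OF assms(1)] shiftp_permutes[OF p, of "m - l" m] sign_shiftp[OF p] assms x True
    by (auto simp: hatS_def)
next
  case False
  then show ?thesis using hatS_small assms by auto
qed

lemma i2_hmul:
  assumes "l \<le> m" "x \<in> hatS l" "y \<in> hatS l"
  shows "i2 m l (hmul x y) = hmul (i2 m l x) (i2 m l y)"
  using i2_eq_shiftp[OF assms(1) hatS_perm] assms hmul_closed by (simp add: hmul_def shiftp_comp)

lemma i2_hom: "l \<le> m \<Longrightarrow> i2 m l \<in> hom (hatSgrp l) (hatSgrp m)"
  by (rule homI) (simp_all add: i2_in_hatS i2_hmul)

lemma i2_i2_shift: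
  assumes "n \<le> m" "m \<le> l" "v \<in> hatS (m - n)"
  shows "i2 m (m - n) v = i2 l (l - n) v"
proof -
  have p: "fst v permutes {..<m - n}" using assms hatS_perm by blast
  have "fst v permutes {..<l - n}" using permutes_subset[OF p] assms by auto
  then show ?thesis using i2_eq_shiftp[of "m - n" m v] i2_eq_shiftp[of "l - n" l v] p assms by simp
qed

lemma i2_i2:
  assumes "n \<le> m" "m \<le> l" "u \<in> hatS (l - m)"
  shows "i2 l (l - m) u = i2 l (l - n) (i2 (l - n) (l - m) u)"
proof -
  have p: "fst u permutes {..<l - m}" using assms hatS_perm by blast
  have "i2 (l - n) (l - m) u = (shiftp (m - n) (fst u), snd u)"
    using i2_eq_shiftp[of "l - m" "l - n" u] p assms by simp
  moreover have "fst (i2 (l - n) (l - m) u) permutes {..<l - n}"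
    using hatS_perm[OF i2_in_hatS] assms by auto
  ultimately show ?thesis
    using i2_eq_shiftp[of "l - m" l u] i2_eq_shiftp[of "l - n" l "i2 (l - n) (l - m) u"] p assms
    by (simp add: shiftp_shiftp)
qed

lemma hmul_i2_commute:
  assumes "a \<in> hatS m" "m \<le> l - k" "k \<le> l" "u \<in> hatS k"
  shows "hmul a (i2 l k u) = hmul (i2 l k u) a"
proof -
  have "fst a permutes {..<l - k}" using permutes_subset[OF hatS_perm[OF assms(1)]] assms by auto
  then show ?thesis
    using i2_eq_shiftp[OF assms(3) hatS_perm[OF assms(4)]] shiftp_commute[of "fst a" "l - k" "fst u"]
    by (simp add: hmul_def add.commute)
qed

definition tau0 :: hs where
  "tau0 = (transpose 0 1, -1)"

definition tau :: "nat \<Rightarrow> hs" where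
  "tau n = i2 n 2 tau0"

lemma tau0_in_hatS: "tau0 \<in> hatS 2"
  by (simp add: tau0_def hatS_def sign_swap_id permutes_swap_id)

lemma tau_eq: "2 \<le> n \<Longrightarrow> tau n = (transpose (n - 2) (n - 1), -1)"
  using i2_eq_shiftp[of 2 n tau0] hatS_perm[OF tau0_in_hatS]
  by (simp add: tau_def tau0_def shiftp_transpose Suc_diff_Suc numeral_2_eq_2)

lemma tau_in_hatS: "2 \<le> n \<Longrightarrow> tau n \<in> hatS n"
  unfolding tau_def using i2_in_hatS tau0_in_hatS by blast

lemma tau_commute: "2 \<le> n \<Longrightarrow> k \<in> hatS (n - 2) \<Longrightarrow> hmul k (tau n) = hmul (tau n) k"
  unfolding tau_def using hmul_i2_commute[of k "n - 2" n 2 tau0] tau0_in_hatS by simp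

lemma i2_tau: "2 \<le> m \<Longrightarrow> m \<le> n \<Longrightarrow> i2 n m (tau m) = tau n"
  using i2_i2[of "n - m" "n - 2" n tau0] tau0_in_hatS by (simp add: tau_def)

context
  fixes m :: nat and U :: "hs set"
  assumes m: "2 \<le> m" and U: "subgroup U (hatSgrp m)"
    and lower: "hatS (m - 1) \<subseteq> U" and tau: "tau m \<in> U"
begin

private lemma U_hmul: "x \<in> U \<Longrightarrow> y \<in> U \<Longrightarrow> hmul x y \<in> U"
  using subgroup.m_closed[OF U] by simp

private lemma U_hinv: "x \<in> U \<Longrightarrow> hinv x \<in> U"
  using subgroup.m_inv_closed[OF U] subgroup.mem_carrier[OF U] hatSgrp_inv by fastforce

private lemma U_last_transposition: "(transpose (m - 2) (m - 1), -1) \<in> U"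
  using tau tau_eq[OF m] by simp

private lemma U_even_shift: "(id, 2 * k) \<in> U"
proof -
  have two: "(id, 2) \<in> U"
  proof (cases "3 \<le> m")
    case True
    then have "(id, 2) \<in> hatS (m - 1)" by (simp add: hatS_def permutes_id)
    then show ?thesis using lower by blast
  next
    case False
    have "hmul (transpose (m - 2) (m - 1), -1) (transpose (m - 2) (m - 1), -1) = (id, -2)"
      by (simp add: hmul_def)
    then show ?thesis
      using U_hinv[OF U_hmul[OF U_last_transposition U_last_transposition]] by (simp add: hinv_def)
  qed
  have minus_two: "(id, -2) \<in> U" using U_hinv[OF two] by (simp add: hinv_def)
  show ?thesis
  proof (induction k rule: int_induct[where k = 0])
    case base
    then show ?case using subgroup.one_closed[OF U] by (simp add: hone_def id_def)
  next
    case (step1 i)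
    have "hmul (id, 2 * i) (id, 2) = (id, 2 * (i + 1))" by (simp add: hmul_def algebra_simps)
    then show ?case using U_hmul[OF step1(2) two] by (simp add: id_def)
  next
    case (step2 i)
    have "hmul (id, 2 * i) (id, -2) = (id, 2 * (i - 1))" by (simp add: hmul_def algebra_simps)
    then show ?case using U_hmul[OF step2(2) minus_two] by (simp add: id_def)
  qed
qed

private lemma U_adjacent_transposition: "Suc i < m \<Longrightarrow> (transpose i (Suc i), -1) \<in> U"
proof (cases "Suc i = m - 1")
  case True
  then have "i = m - 2" by simp
  then show ?thesis using U_last_transposition True by simp
next
  case False
  assume "Suc i < m"
  with False have "(transpose i (Suc i), -1) \<in> hatS (m - 1)"
    by (simp add: hatS_def sign_swap_id permutes_swap_id)
  then show ?thesis using lower by blast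
qed

private lemma U_transposition_gap: "a + d + 1 < m \<Longrightarrow> (transpose a (a + d + 1), -1) \<in> U"
proof (induction d)
  case 0
  then show ?case using U_adjacent_transposition[of a] by simp
next
  case (Suc d)
  let ?b = "a + d + 1"
  have "transpose (Suc ?b) ?b \<circ> transpose ?b a \<circ> transpose (Suc ?b) ?b = transpose (Suc ?b) a"
    by (rule transpose_comp_triple) auto
  then have "hmul (hmul (hmul (transpose ?b (Suc ?b), -1) (transpose a ?b, -1))
      (transpose ?b (Suc ?b), -1)) (id, 2) = (transpose a (a + Suc d + 1), -1)"
    by (simp add: hmul_def transpose_commute comp_assoc)
  moreover have "(transpose ?b (Suc ?b), -1) \<in> U" "(transpose a ?b, -1) \<in> U" "(id, 2) \<in> U"
    using U_adjacent_transposition[of ?b] Suc U_even_shift[of 1] by simp_all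
  ultimately show ?case using U_hmul by metis
qed

private lemma U_transposition: "a < m \<Longrightarrow> b < m \<Longrightarrow> a \<noteq> b \<Longrightarrow> (transpose a b, -1) \<in> U"
  using U_transposition_gap[of a "b - a - 1"] U_transposition_gap[of b "a - b - 1"]
  by (cases "a < b") (simp_all add: transpose_commute)

lemma hatS_generated: "hatS m \<subseteq> U"
proof
  fix x assume x: "x \<in> hatS m"
  obtain s d where sd: "x = (s, d)" by fastforce
  have "s permutes {..<m}" "odd d \<longleftrightarrow> sign s = -1" using x sd m by (auto simp: hatS_def)
  moreover have "\<forall>d. (odd d \<longleftrightarrow> sign s = -1) \<longrightarrow> (s, d) \<in> U"
    using \<open>s permutes {..<m}\<close> finite_lessThan[of m]
  proof (induction rule: permutes_induct)
    case id
    show ?case using U_even_shift by (auto elim!: evenE simp: id_def)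
  next
    case (swap a b p)
    have "permutation p" using swap permutes_lessThan_permutation by blast
    then have sg: "sign (transpose a b \<circ> p) = - sign p"
      using sign_compose[OF permutation_swap_id \<open>permutation p\<close>] swap(3) by (simp add: sign_swap_id)
    show ?case
    proof (intro allI impI)
      fix d :: int assume d: "odd d \<longleftrightarrow> sign (transpose a b \<circ> p) = -1"
      have "sign p = 1 \<or> sign p = -1" by (cases p rule: sign_cases) simp_all
      then have "odd (d + 1) \<longleftrightarrow> sign p = -1" using d sg by auto
      then have "hmul (transpose a b, -1) (p, d + 1) \<in> U"
        using U_hmul[OF U_transposition] swap by blast
      then show "(transpose a b \<circ> p, d) \<in> U" by (simp add: hmul_def)
    qed
  qed
  ultimately show "x \<in> U" using sd by blast
qed

end

lemma i2_right_stabilizer_subgroup: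
  assumes "m \<le> N"
  shows "subgroup {u \<in> hatS m. \<forall>a\<in>hatS N. F (hmul a (i2 N m u)) = F a} (hatSgrp m)"
    (is "subgroup ?U _")
proof
  show "?U \<subseteq> carrier (hatSgrp m)" by auto
  show "\<one>\<^bsub>hatSgrp m\<^esub> \<in> ?U" by simp
next
  fix x y assume "x \<in> ?U" "y \<in> ?U"
  then have xy: "x \<in> hatS m" "y \<in> hatS m"
    and Fx: "\<And>a. a \<in> hatS N \<Longrightarrow> F (hmul a (i2 N m x)) = F a"
    and Fy: "\<And>a. a \<in> hatS N \<Longrightarrow> F (hmul a (i2 N m y)) = F a" by auto
  have "F (hmul a (i2 N m (hmul x y))) = F a" if a: "a \<in> hatS N" for a
  proof -
    have "hmul a (i2 N m (hmul x y)) = hmul (hmul a (i2 N m x)) (i2 N m y)"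
      using i2_hmul[OF assms xy] by (simp only: hmul_assoc)
    then show ?thesis using Fx[OF a] Fy[OF hmul_closed[OF a i2_in_hatS[OF assms xy(1)]]] by simp
  qed
  then show "x \<otimes>\<^bsub>hatSgrp m\<^esub> y \<in> ?U" using hmul_closed[OF xy] by simp
next
  fix x assume "x \<in> ?U"
  then have x: "x \<in> hatS m" and Fx: "\<And>a. a \<in> hatS N \<Longrightarrow> F (hmul a (i2 N m x)) = F a" by auto
  have "F (hmul a (i2 N m (hinv x))) = F a" if a: "a \<in> hatS N" for a
  proof -
    have "hmul (hmul a (i2 N m (hinv x))) (i2 N m x) = a"
      using i2_hmul[OF assms hinv_closed[OF x] x] hmul_hinv[OF x] by (simp add: hmul_assoc)
    then show ?thesis
      using Fx[OF hmul_closed[OF a i2_in_hatS[OF assms hinv_closed[OF x]]]] by simp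
  qed
  then show "inv\<^bsub>hatSgrp m\<^esub> x \<in> ?U" using hinv_closed[OF x] hatSgrp_inv[OF x] by simp
qed

section \<open>The category hat FI\<close>

lemma hcos_mem: "x \<in> hcos m n t \<longleftrightarrow> (\<exists>u\<in>hatS (m - n). x = hmul t (i2 m (m - n) u))"
  by (auto simp: hcos_def l_coset_def)

lemma hcos_self: "t \<in> hcos m n t"
  unfolding hcos_mem by (rule bexI[of _ hone]) auto

lemma hcos_eq:
  assumes "t \<in> hatS m" "t' \<in> hcos m n t"
  shows "hcos m n t' = hcos m n t"
proof -
  interpret i2: group_hom "hatSgrp (m - n)" "hatSgrp m" "i2 m (m - n)"
    using group_homI[OF group_hatSgrp group_hatSgrp i2_hom] by simp
  have "subgroup (i2 m (m - n) ` hatS (m - n)) (hatSgrp m)" using i2.img_is_subgroup by simp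
  then show ?thesis
    using group.l_repr_independence[OF group_hatSgrp] assms by (simp add: hcos_def)
qed

lemma hcos_hmul_i2:
  assumes "t \<in> hatS m" "u \<in> hatS (m - n)"
  shows "hcos m n (hmul t (i2 m (m - n) u)) = hcos m n t"
proof -
  have "hmul t (i2 m (m - n) u) \<in> hcos m n t" using assms(2) by (auto simp: hcos_mem)
  then show ?thesis using hcos_eq[OF assms(1)] by blast
qed

lemma hcos_same: "hcos n n t = {t}"
  using hatS_small[of 0] by (auto simp: hcos_mem)

lemma FIhat_iff: "f \<in> FIhat n m \<longleftrightarrow> n \<le> m \<and> (\<exists>t\<in>hatS m. f = hcos m n t)"
  by (auto simp: FIhat_def)

lemma hcos_in_FIhat: "n \<le> m \<Longrightarrow> t \<in> hatS m \<Longrightarrow> hcos m n t \<in> FIhat n m"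
  by (auto simp: FIhat_iff)

lemma ficomp_hcos:
  assumes "n \<le> m" "m \<le> l" "s \<in> hatS m" "t \<in> hatS l"
  shows "ficomp n m l (hcos m n s) (hcos l m t) = hcos l n (hmul t s)"
proof
  show "hcos l n (hmul t s) \<subseteq> ficomp n m l (hcos m n s) (hcos l m t)"
    unfolding ficomp_def using hcos_self by blast
next
  have ts: "hmul t s \<in> hatS l" using hmul_closed hatS_mono assms by blast
  show "ficomp n m l (hcos m n s) (hcos l m t) \<subseteq> hcos l n (hmul t s)"
  proof
    fix x assume "x \<in> ficomp n m l (hcos m n s) (hcos l m t)"
    then obtain s' t' where "s' \<in> hcos m n s" "t' \<in> hcos l m t" and x: "x \<in> hcos l n (hmul t' s')"
      unfolding ficomp_def by blast
    then obtain v u where v: "v \<in> hatS (m - n)" and u: "u \<in> hatS (l - m)"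
      and "s' = hmul s (i2 m (m - n) v)" "t' = hmul t (i2 l (l - m) u)"
      unfolding hcos_mem by blast
    with x have x: "x \<in> hcos l n (hmul (hmul t (i2 l (l - m) u)) (hmul s (i2 m (m - n) v)))"
      by simp
    define u' where "u' = i2 (l - n) (l - m) u"
    have u': "u' \<in> hatS (l - n)" "i2 l (l - m) u = i2 l (l - n) u'"
      using i2_in_hatS u assms i2_i2[OF assms(1,2) u] by (simp_all add: u'_def)
    have v': "v \<in> hatS (l - n)" "i2 m (m - n) v = i2 l (l - n) v"
      using subsetD[OF hatS_mono[OF diff_le_mono[OF assms(2)]] v] i2_i2_shift[OF assms(1,2) v] by auto
    have "hmul (i2 l (l - m) u) s = hmul s (i2 l (l - m) u)"
      using hmul_i2_commute[OF assms(3), of l "l - m" u] assms u by simp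
    then have "hmul (hmul t (i2 l (l - m) u)) (hmul s (i2 m (m - n) v))
        = hmul (hmul t s) (hmul (i2 l (l - n) u') (i2 l (l - n) v))"
      using u' v' by (metis hmul_assoc)
    also have "\<dots> = hmul (hmul t s) (i2 l (l - n) (hmul u' v))"
      using i2_hmul[of "l - n" l u' v] u' v' by simp
    finally have "hmul (hmul t (i2 l (l - m) u)) (hmul s (i2 m (m - n) v))
        = hmul (hmul t s) (i2 l (l - n) (hmul u' v))" .
    then show "x \<in> hcos l n (hmul t s)"
      using x hcos_hmul_i2[OF ts hmul_closed[OF u'(1) v'(1)]] by simp
  qed
qed

lemma firact_hcos:
  assumes "n \<le> m" "s \<in> hatS m" "k \<in> hatS n"
  shows "firact n m (hcos m n s) k = hcos m n (hmul s k)"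
  unfolding firact_def using ficomp_hcos[OF order_refl assms(1) assms(3,2)] .

lemma ficomp_FIhat:
  assumes "f \<in> FIhat n m" "g \<in> FIhat m l"
  shows "ficomp n m l f g \<in> FIhat n l"
proof -
  obtain s t where "n \<le> m" "m \<le> l" "s \<in> hatS m" "t \<in> hatS l" "f = hcos m n s" "g = hcos l m t"
    using assms by (auto simp: FIhat_iff)
  then show ?thesis using ficomp_hcos hcos_in_FIhat hmul_closed hatS_mono by (metis order_trans subsetD)
qed

lemma ficomp_assoc:
  assumes "f \<in> FIhat n m" "g \<in> FIhat m l" "h \<in> FIhat l p"
  shows "ficomp n l p (ficomp n m l f g) h = ficomp n m p f (ficomp m l p g h)"
proof -
  obtain s t r where "n \<le> m" "m \<le> l" "l \<le> p" "s \<in> hatS m" "t \<in> hatS l" "r \<in> hatS p"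
     "f = hcos m n s" "g = hcos l m t" "h = hcos p l r"
    using assms by (auto simp: FIhat_iff)
  moreover have "s \<in> hatS l" "t \<in> hatS p" using hatS_mono calculation by blast+
  ultimately show ?thesis by (simp add: ficomp_hcos hmul_closed hmul_assoc)
qed

lemma firact_FIhat:
  assumes "f \<in> FIhat n m" "k \<in> hatS n"
  shows "firact n m f k \<in> FIhat n m"
proof -
  obtain s where s: "n \<le> m" "s \<in> hatS m" "f = hcos m n s" using assms by (auto simp: FIhat_iff)
  moreover have "k \<in> hatS m" using hatS_mono s assms by blast
  ultimately show ?thesis using assms firact_hcos hcos_in_FIhat hmul_closed by metis
qed

lemma firact_ficomp:
  assumes "f \<in> FIhat j m" "g \<in> FIhat m l" "k \<in> hatS j"
  shows "ficomp j m l (firact j m f k) g = firact j l (ficomp j m l f g) k"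
proof -
  obtain s t where "j \<le> m" "m \<le> l" "s \<in> hatS m" "t \<in> hatS l" "f = hcos m j s" "g = hcos l m t"
    using assms by (auto simp: FIhat_iff)
  moreover have "k \<in> hatS m" "s \<in> hatS l" using hatS_mono calculation assms by blast+
  ultimately show ?thesis using assms by (simp add: firact_hcos ficomp_hcos hmul_closed hmul_assoc)
qed

section \<open>The free hat FI-module I(V)\<close>

type_synonym 'v IVelem = "nat \<Rightarrow> (hs set \<times> 'v \<Rightarrow>\<^sub>0 int) set"

locale hatS_module_seq =
  fixes V :: "nat \<Rightarrow> 'v monoid" and A :: "nat \<Rightarrow> hs \<Rightarrow> 'v \<Rightarrow> 'v"
  assumes smod: "smod V A"
begin

lemma V_comm_group: "comm_group (V n)"
  using smod by (simp add: smod_def)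

lemma V_group: "group (V n)"
  using V_comm_group comm_group.axioms(2) by blast

lemma A_hom: "g \<in> hatS n \<Longrightarrow> A n g \<in> hom (V n) (V n)"
  using smod by (simp add: smod_def)

lemma A_closed: "g \<in> hatS n \<Longrightarrow> v \<in> carrier (V n) \<Longrightarrow> A n g v \<in> carrier (V n)"
  by (rule hom_in_carrier[OF A_hom])

lemma A_mult: "g \<in> hatS n \<Longrightarrow> v \<in> carrier (V n) \<Longrightarrow> w \<in> carrier (V n) \<Longrightarrow>
    A n g (v \<otimes>\<^bsub>V n\<^esub> w) = A n g v \<otimes>\<^bsub>V n\<^esub> A n g w"
  by (rule hom_mult[OF A_hom])

lemma A_hone: "v \<in> carrier (V n) \<Longrightarrow> A n hone v = v"
  using smod unfolding smod_def by blast

lemma A_hmul: "g \<in> hatS n \<Longrightarrow> h \<in> hatS n \<Longrightarrow> v \<in> carrier (V n) \<Longrightarrow> A n (hmul g h) v = A n g (A n h v)"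
  using smod unfolding smod_def by blast

abbreviation "Ic n m \<equiv> Icomp V A n m"
abbreviation "TRi n m \<equiv> trel (FIhat n m) (firact n m) (hatS n) (V n) (A n)"
abbreviation "TFi n m \<equiv> tfree (FIhat n m) (V n)"

abbreviation itens :: "nat \<Rightarrow> nat \<Rightarrow> hs set \<Rightarrow> 'v \<Rightarrow> (hs set \<times> 'v \<Rightarrow>\<^sub>0 int) set" where
  "itens j m f v \<equiv> TRi j m #>\<^bsub>TFi j m\<^esub> frag_of (f, v)"

lemma Ic_wf: "tens_wf (FIhat n m) (firact n m) (hatS n) (V n) (A n)"
  using V_comm_group firact_FIhat A_closed by (simp add: tens_wf_def)

lemma Icomp_eq: "Ic n m = tens (FIhat n m) (firact n m) (hatS n) (V n) (A n)"
  by (simp add: Icomp_def)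

lemma Ic_comm_group: "comm_group (Ic n m)"
  unfolding Icomp_eq using tens_comm_group[OF Ic_wf] .

lemma Ic_group: "group (Ic n m)"
  using Ic_comm_group comm_group.axioms(2) by blast

lemma Ic_one_closed: "\<one>\<^bsub>Ic n m\<^esub> \<in> carrier (Ic n m)"
  using Ic_group group.is_monoid monoid.one_closed by blast

lemma itens_closed:
  "j \<le> m \<Longrightarrow> s \<in> hatS m \<Longrightarrow> v \<in> carrier (V j) \<Longrightarrow> itens j m (hcos m j s) v \<in> carrier (Ic j m)"
  unfolding Icomp_eq by (intro tclass_in_carrier) (simp add: hcos_in_FIhat)

lemma itens_act:
  assumes "j \<le> m" "s \<in> hatS m" "k \<in> hatS j" "v \<in> carrier (V j)"
  shows "itens j m (hcos m j (hmul s k)) v = itens j m (hcos m j s) (A j k v)"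
  using tclass_act[OF Ic_wf hcos_in_FIhat[OF assms(1,2)] assms(3,4)] firact_hcos[OF assms(1,2,3)] by simp

lemma itens_hom: "j \<le> m \<Longrightarrow> s \<in> hatS m \<Longrightarrow> itens j m (hcos m j s) \<in> hom (V j) (Ic j m)"
  unfolding Icomp_eq using tensor_hom[OF Ic_wf hcos_in_FIhat] .

lemma Ic_hom_eqI:
  assumes "group H" "h1 \<in> hom (Ic j m) H" "h2 \<in> hom (Ic j m) H"
    and "\<And>s v. s \<in> hatS m \<Longrightarrow> v \<in> carrier (V j) \<Longrightarrow>
      h1 (itens j m (hcos m j s) v) = h2 (itens j m (hcos m j s) v)"
    and "z \<in> carrier (Ic j m)"
  shows "h1 z = h2 z"
proof (rule tens_hom_eqI[OF Ic_wf assms(1) assms(2,3)[unfolded Icomp_eq] _ assms(5)[unfolded Icomp_eq]])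
  fix f v assume "f \<in> FIhat j m" "v \<in> carrier (V j)"
  then show "h1 (itens j m f v) = h2 (itens j m f v)" using assms(4) by (auto simp: FIhat_iff)
qed

lemma IV_group: "group (IV V A m)"
  unfolding IV_def using Ic_group by simp

lemma IV_carrier: "carrier (IV V A m) = (\<Pi>\<^sub>E n\<in>{..m}. carrier (Ic n m))"
proof -
  have "carrier (IV V A m)
      = {x \<in> \<Pi>\<^sub>E n\<in>{..m}. carrier (Ic n m). finite {i \<in> {..m}. x i \<noteq> \<one>\<^bsub>Ic i m\<^esub>}}"
    unfolding IV_def by (rule carrier_sum_group) (rule Ic_group)
  then show ?thesis by auto
qed

lemma IV_mult: "x \<otimes>\<^bsub>IV V A m\<^esub> y = (\<lambda>i\<in>{..m}. x i \<otimes>\<^bsub>Ic i m\<^esub> y i)"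
  unfolding IV_def by simp

lemma IV_one: "\<one>\<^bsub>IV V A m\<^esub> = (\<lambda>i\<in>{..m}. \<one>\<^bsub>Ic i m\<^esub>)"
  unfolding IV_def by simp

lemma IV_comm_group: "comm_group (IV V A m)"
proof (rule group.group_comm_groupI[OF IV_group])
  fix x y assume "x \<in> carrier (IV V A m)" "y \<in> carrier (IV V A m)"
  then show "x \<otimes>\<^bsub>IV V A m\<^esub> y = y \<otimes>\<^bsub>IV V A m\<^esub> x"
    unfolding IV_mult using comm_monoid.m_comm[OF comm_group.axioms(1)[OF Ic_comm_group]]
    by (intro restrict_ext) (simp add: IV_carrier PiE_iff)
qed

lemma IV_component_closed: "y \<in> carrier (IV V A m) \<Longrightarrow> j \<le> m \<Longrightarrow> y j \<in> carrier (Ic j m)"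
  by (simp add: IV_carrier PiE_iff)

definition postcomp ::
    "nat \<Rightarrow> nat \<Rightarrow> nat \<Rightarrow> hs set \<Rightarrow> (hs set \<times> 'v \<Rightarrow>\<^sub>0 int) set \<Rightarrow> (hs set \<times> 'v \<Rightarrow>\<^sub>0 int) set"
  where "postcomp j m l g = qmap (TFi j l) (TRi j l) (frag_extend (\<lambda>(f, v). frag_of (ficomp j m l f g, v)))"

lemma IVmor_eq:
  "IVmor V A m l g x
    = (\<lambda>n. if n \<le> m then postcomp n m l g (x n) else if n \<le> l then \<one>\<^bsub>Ic n l\<^esub> else undefined)"
  unfolding IVmor_def postcomp_def by simp

context
  fixes j m l g
  assumes jm: "j \<le> m" and g: "g \<in> FIhat m l"
begin

private lemma postcomp_wf:
  shows "\<And>f v. f \<in> FIhat j m \<Longrightarrow> v \<in> carrier (V j) \<Longrightarrow> frag_of (ficomp j m l f g, v) \<in> carrier (TFi j l)"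
    and "\<And>f k v. f \<in> FIhat j m \<Longrightarrow> k \<in> hatS j \<Longrightarrow> v \<in> carrier (V j) \<Longrightarrow>
      frag_of (ficomp j m l (firact j m f k) g, v) - frag_of (ficomp j m l f g, A j k v) \<in> TRi j l"
    and "\<And>f v v'. f \<in> FIhat j m \<Longrightarrow> v \<in> carrier (V j) \<Longrightarrow> v' \<in> carrier (V j) \<Longrightarrow>
      frag_of (ficomp j m l f g, v \<otimes>\<^bsub>V j\<^esub> v') - frag_of (ficomp j m l f g, v)
        - frag_of (ficomp j m l f g, v') \<in> TRi j l"
proof -
  fix f v assume "f \<in> FIhat j m" "v \<in> carrier (V j)"
  then show "frag_of (ficomp j m l f g, v) \<in> carrier (TFi j l)" using ficomp_FIhat g by simp
next
  fix f k v assume fkv: "f \<in> FIhat j m" "k \<in> hatS j" "v \<in> carrier (V j)"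
  then have "frag_of (firact j l (ficomp j m l f g) k, v) - frag_of (ficomp j m l f g, A j k v)
      \<in> frel (FIhat j l) (firact j l) (hatS j) (V j) (A j)"
    unfolding frel_def using ficomp_FIhat[OF fkv(1) g] by blast
  then show "frag_of (ficomp j m l (firact j m f k) g, v) - frag_of (ficomp j m l f g, A j k v) \<in> TRi j l"
    using firact_ficomp[OF fkv(1) g fkv(2)] by (simp add: frel_in_trel)
next
  fix f v v' assume "f \<in> FIhat j m" "v \<in> carrier (V j)" "v' \<in> carrier (V j)"
  then have "frag_of (ficomp j m l f g, v \<otimes>\<^bsub>V j\<^esub> v') - frag_of (ficomp j m l f g, v)
      - frag_of (ficomp j m l f g, v') \<in> frel (FIhat j l) (firact j l) (hatS j) (V j) (A j)"
    unfolding frel_def using ficomp_FIhat g by blast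
  then show "frag_of (ficomp j m l f g, v \<otimes>\<^bsub>V j\<^esub> v') - frag_of (ficomp j m l f g, v)
      - frag_of (ficomp j m l f g, v') \<in> TRi j l" by (rule frel_in_trel)
qed

lemma postcomp_hom: "postcomp j m l g \<in> hom (Ic j m) (Ic j l)"
  unfolding postcomp_def Icomp_eq by (rule tens_map_hom[OF Ic_wf Ic_wf]) (use postcomp_wf in auto)

lemma postcomp_tensor:
  assumes "f \<in> FIhat j m" "v \<in> carrier (V j)"
  shows "postcomp j m l g (itens j m f v) = itens j l (ficomp j m l f g) v"
  unfolding postcomp_def using assms
  by (subst tens_map_tclass[OF Ic_wf Ic_wf]) (use postcomp_wf in auto)

end

lemma postcomp_hcos:
  assumes "j \<le> m" "m \<le> l" "s \<in> hatS m" "t \<in> hatS l" "v \<in> carrier (V j)"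
  shows "postcomp j m l (hcos l m t) (itens j m (hcos m j s) v) = itens j l (hcos l j (hmul t s)) v"
  using postcomp_tensor[OF assms(1) hcos_in_FIhat[OF assms(2,4)] hcos_in_FIhat[OF assms(1,3)] assms(5)]
    ficomp_hcos[OF assms(1-4)] by simp

lemma postcomp_one: "j \<le> m \<Longrightarrow> g \<in> FIhat m l \<Longrightarrow> postcomp j m l g \<one>\<^bsub>Ic j m\<^esub> = \<one>\<^bsub>Ic j l\<^esub>"
  using group_hom.hom_one[OF group_homI[OF Ic_group Ic_group postcomp_hom]] .

lemma postcomp_comp:
  assumes "j \<le> n" "f \<in> FIhat n m" "g \<in> FIhat m l" "z \<in> carrier (Ic j n)"
  shows "postcomp j m l g (postcomp j n m f z) = postcomp j n l (ficomp n m l f g) z"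
proof -
  have jm: "j \<le> m" using assms by (auto simp: FIhat_iff)
  have "(postcomp j m l g \<circ> postcomp j n m f) z = postcomp j n l (ficomp n m l f g) z"
  proof (rule Ic_hom_eqI[OF Ic_group _ _ _ assms(4)])
    show "postcomp j m l g \<circ> postcomp j n m f \<in> hom (Ic j n) (Ic j l)"
      using hom_compose[OF postcomp_hom[OF assms(1,2)] postcomp_hom[OF jm assms(3)]] .
    show "postcomp j n l (ficomp n m l f g) \<in> hom (Ic j n) (Ic j l)"
      using postcomp_hom[OF assms(1) ficomp_FIhat[OF assms(2,3)]] .
  next
    fix s v assume "s \<in> hatS n" "v \<in> carrier (V j)"
    then show "(postcomp j m l g \<circ> postcomp j n m f) (itens j n (hcos n j s) v)
        = postcomp j n l (ficomp n m l f g) (itens j n (hcos n j s) v)"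
      using assms jm ficomp_FIhat ficomp_assoc hcos_in_FIhat by (simp add: postcomp_tensor)
  qed
  then show ?thesis by simp
qed

lemma IVmor_hom:
  assumes "g \<in> FIhat m l"
  shows "IVmor V A m l g \<in> hom (IV V A m) (IV V A l)"
proof -
  have ml: "m \<le> l" using assms by (auto simp: FIhat_iff)
  show ?thesis
  proof (rule homI)
    fix x assume "x \<in> carrier (IV V A m)"
    then show "IVmor V A m l g x \<in> carrier (IV V A l)"
      using hom_in_carrier[OF postcomp_hom[OF _ assms]] ml Ic_one_closed
      by (auto simp: IV_carrier IVmor_eq PiE_iff extensional_def)
  next
    fix x y assume "x \<in> carrier (IV V A m)" "y \<in> carrier (IV V A m)"
    then show "IVmor V A m l g (x \<otimes>\<^bsub>IV V A m\<^esub> y) = IVmor V A m l g x \<otimes>\<^bsub>IV V A l\<^esub> IVmor V A m l g y"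
      using hom_mult[OF postcomp_hom[OF _ assms]] ml monoid.l_one[OF group.is_monoid[OF Ic_group]] Ic_one_closed
      by (auto simp: IVmor_eq IV_mult IV_carrier PiE_iff fun_eq_iff)
  qed
qed

lemma IVmor_comp:
  assumes "f \<in> FIhat n m" "g \<in> FIhat m l" "x \<in> carrier (IV V A n)"
  shows "IVmor V A m l g (IVmor V A n m f x) = IVmor V A n l (ficomp n m l f g) x"
proof -
  have "n \<le> m" "m \<le> l" using assms by (auto simp: FIhat_iff)
  then show ?thesis
    using assms postcomp_comp postcomp_one IV_component_closed by (auto simp: IVmor_eq fun_eq_iff)
qed

definition incl :: "nat \<Rightarrow> nat \<Rightarrow> (hs set \<times> 'v \<Rightarrow>\<^sub>0 int) set \<Rightarrow> 'v IVelem" where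
  "incl m j z = (\<lambda>i\<in>{..m}. if i = j then z else \<one>\<^bsub>Ic i m\<^esub>)"

lemma incl_same [simp]: "j \<le> m \<Longrightarrow> incl m j z j = z"
  by (simp add: incl_def)

lemma incl_other [simp]: "i \<noteq> j \<Longrightarrow> i \<le> m \<Longrightarrow> incl m j z i = \<one>\<^bsub>Ic i m\<^esub>"
  by (simp add: incl_def)

lemma incl_hom: "j \<le> m \<Longrightarrow> incl m j \<in> hom (Ic j m) (IV V A m)"
  by (rule homI)
    (auto simp: incl_def IV_carrier IV_mult Ic_one_closed monoid.l_one[OF group.is_monoid[OF Ic_group]]
      intro!: restrict_ext)

lemma incl_closed: "j \<le> m \<Longrightarrow> z \<in> carrier (Ic j m) \<Longrightarrow> incl m j z \<in> carrier (IV V A m)"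
  by (rule hom_in_carrier[OF incl_hom])

lemma IVmor_incl:
  assumes "g \<in> FIhat m l" "j \<le> m" "z \<in> carrier (Ic j m)"
  shows "IVmor V A m l g (incl m j z) = incl l j (postcomp j m l g z)"
proof -
  have "m \<le> l" using assms by (auto simp: FIhat_iff)
  then show ?thesis using assms postcomp_one by (auto simp: IVmor_eq incl_def fun_eq_iff)
qed

lemma IV_hom_eqI:
  assumes H: "group H" and h1: "h1 \<in> hom (IV V A m) H" and h2: "h2 \<in> hom (IV V A m) H"
    and eq: "\<And>j z. j \<le> m \<Longrightarrow> z \<in> carrier (Ic j m) \<Longrightarrow> h1 (incl m j z) = h2 (incl m j z)"
    and x: "x \<in> carrier (IV V A m)"
  shows "h1 x = h2 x"
proof -
  interpret h1: group_hom "IV V A m" H h1 using group_homI[OF IV_group H h1] .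
  interpret h2: group_hom "IV V A m" H h2 using group_homI[OF IV_group H h2] .
  define x_on where "x_on J = (\<lambda>i\<in>{..m}. if i \<in> J then x i else \<one>\<^bsub>Ic i m\<^esub>)" for J
  have xc: "x i \<in> carrier (Ic i m)" if "i \<le> m" for i using x that by (rule IV_component_closed)
  have x_on_closed: "x_on J \<in> carrier (IV V A m)" for J
    using xc by (auto simp: x_on_def IV_carrier Ic_one_closed)
  have "h1 (x_on J) = h2 (x_on J)" if "finite J" for J
    using that
  proof (induction J rule: finite_induct)
    case empty
    have "x_on {} = \<one>\<^bsub>IV V A m\<^esub>" by (simp add: x_on_def IV_one)
    then show ?case by simp
  next
    case (insert j J)
    show ?case
    proof (cases "j \<le> m")
      case True
      have "x_on (insert j J) = x_on J \<otimes>\<^bsub>IV V A m\<^esub> incl m j (x j)"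
        unfolding IV_mult x_on_def using insert(2) xc Ic_one_closed
          monoid.r_one[OF group.is_monoid[OF Ic_group]] monoid.l_one[OF group.is_monoid[OF Ic_group]]
        by (intro restrict_ext) (auto simp: incl_def)
      then show ?thesis
        using h1.hom_mult[OF x_on_closed incl_closed] h2.hom_mult[OF x_on_closed incl_closed]
          insert(3) eq[OF True xc[OF True]] True xc by simp
    next
      case False
      then have "x_on (insert j J) = x_on J" by (auto simp: x_on_def intro!: restrict_ext)
      then show ?thesis using insert(3) by simp
    qed
  qed
  moreover have "x_on {..m} = x" using x by (auto simp: x_on_def IV_carrier PiE_iff extensional_def fun_eq_iff)
  ultimately show ?thesis by (metis finite_atMost)
qed

abbreviation "MI \<equiv> IV V A"
abbreviation "FI \<equiv> IVmor V A"

lemma mact_hom: "g \<in> hatS k \<Longrightarrow> mact FI k g \<in> hom (MI k) (MI k)"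
  unfolding mact_def using IVmor_hom hcos_in_FIhat by blast

lemma mact_closed: "g \<in> hatS k \<Longrightarrow> w \<in> carrier (MI k) \<Longrightarrow> mact FI k g w \<in> carrier (MI k)"
  by (rule hom_in_carrier[OF mact_hom])

lemma iota_hom: "iota FI k \<in> hom (MI k) (MI (Suc k))"
  unfolding iota_def using IVmor_hom hcos_in_FIhat by simp

lemma iota_closed: "w \<in> carrier (MI k) \<Longrightarrow> iota FI k w \<in> carrier (MI (Suc k))"
  by (rule hom_in_carrier[OF iota_hom])

lemma iota_mult: "w \<in> carrier (MI k) \<Longrightarrow> w' \<in> carrier (MI k) \<Longrightarrow>
   iota FI k (w \<otimes>\<^bsub>MI k\<^esub> w') = iota FI k w \<otimes>\<^bsub>MI (Suc k)\<^esub> iota FI k w'"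
  by (rule hom_mult[OF iota_hom])

lemma iota_top: "iota FI k w (Suc k) = \<one>\<^bsub>Ic (Suc k) (Suc k)\<^esub>"
  by (simp add: iota_def IVmor_eq)

lemma iota_mact:
  assumes "g \<in> hatS k" "w \<in> carrier (MI k)"
  shows "iota FI k (mact FI k g w) = mact FI (Suc k) g (iota FI k w)"
proof -
  have g: "g \<in> hatS (Suc k)" using hatS_mono assms(1) by (meson le_SucI order_refl subsetD)
  have "iota FI k (mact FI k g w) = FI k (Suc k) (hcos (Suc k) k g) w"
    using IVmor_comp[OF hcos_in_FIhat hcos_in_FIhat assms(2)] assms(1) ficomp_hcos[of k k "Suc k" g hone]
    by (simp add: iota_def mact_def)
  also have "\<dots> = mact FI (Suc k) g (iota FI k w)"
    using IVmor_comp[OF hcos_in_FIhat hcos_in_FIhat assms(2)] g ficomp_hcos[of k "Suc k" "Suc k" hone g]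
    by (simp add: iota_def mact_def)
  finally show ?thesis .
qed

lemma mact_incl_itens:
  assumes "j \<le> N" "k \<in> hatS N" "s \<in> hatS N" "v \<in> carrier (V j)"
  shows "mact FI N k (incl N j (itens j N (hcos N j s) v)) = incl N j (itens j N (hcos N j (hmul k s)) v)"
  using IVmor_incl[OF hcos_in_FIhat[OF order_refl assms(2)] assms(1) itens_closed[OF assms(1,3,4)]]
    postcomp_hcos[OF assms(1) order_refl assms(3,2,4)] by (simp add: mact_def)

lemma iota_incl_itens:
  assumes "j \<le> k" "s \<in> hatS k" "v \<in> carrier (V j)"
  shows "iota FI k (incl k j (itens j k (hcos k j s) v)) = incl (Suc k) j (itens j (Suc k) (hcos (Suc k) j s) v)"
  using IVmor_incl[OF hcos_in_FIhat assms(1) itens_closed[OF assms]] assms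
    postcomp_hcos[of j k "Suc k" s hone v] by (simp add: iota_def)

section \<open>The complex in degrees -1, 0 and 1\<close>

abbreviation "Ind n k \<equiv> tens (hatS n) hmul (hatS k) (MI k) (mact FI k)"
abbreviation "TRc n k \<equiv> trel (hatS n) hmul (hatS k) (MI k) (mact FI k)"
abbreviation "TFc n k \<equiv> tfree (hatS n) (MI k)"
text \<open>ctens n k g y is the elementary tensor g (x) y of Ind_{hat S_k}^{hat S_n} I(V)_k, which is
  C_p(I(V))_n for k = n - p - 1.\<close>

abbreviation ctens :: "nat \<Rightarrow> nat \<Rightarrow> hs \<Rightarrow> 'v IVelem \<Rightarrow> (hs \<times> 'v IVelem \<Rightarrow>\<^sub>0 int) set" where
  "ctens n k g y \<equiv> TRc n k #>\<^bsub>TFc n k\<^esub> frag_of (g, y)"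

lemma Ind_wf: "k \<le> n \<Longrightarrow> tens_wf (hatS n) hmul (hatS k) (MI k) (mact FI k)"
  unfolding tens_wf_def using IV_comm_group mact_closed hmul_closed hatS_mono by blast

lemma Ind_empty_wf: "tens_wf {} hmul {} (MI 0) (mact FI 0)"
  unfolding tens_wf_def using IV_comm_group by blast

lemma Ind_group: "k \<le> n \<Longrightarrow> group (Ind n k)"
  using tens_group[OF Ind_wf] .

lemma ctens_closed: "g \<in> hatS n \<Longrightarrow> y \<in> carrier (MI k) \<Longrightarrow> ctens n k g y \<in> carrier (Ind n k)"
  by (simp add: tclass_in_carrier)

lemma ctens_hom: "k \<le> n \<Longrightarrow> g \<in> hatS n \<Longrightarrow> ctens n k g \<in> hom (MI k) (Ind n k)"
  using tensor_hom[OF Ind_wf] .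

lemma ctens_act:
  assumes "k \<le> n" "x \<in> hatS n" "g \<in> hatS k" "y \<in> carrier (MI k)"
  shows "ctens n k (hmul x g) y = ctens n k x (mact FI k g y)"
  using tclass_act[OF Ind_wf[OF assms(1)] assms(2-4)] .

lemma Ind_hom_eqI:
  assumes "k \<le> n" "group H" "h1 \<in> hom (Ind n k) H" "h2 \<in> hom (Ind n k) H"
    and "\<And>g y. g \<in> hatS n \<Longrightarrow> y \<in> carrier (MI k) \<Longrightarrow> h1 (ctens n k g y) = h2 (ctens n k g y)"
    and "z \<in> carrier (Ind n k)"
  shows "h1 z = h2 z"
  using tens_hom_eqI[OF Ind_wf assms(2-6)] assms(1) .

lemma Cc_eq: "-1 \<le> p \<Longrightarrow> p + 1 \<le> int n \<Longrightarrow> Cc MI FI p n = Ind n (nat (int n - p - 1))"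
  by (simp add: Cc_def Let_def)

lemma Cc_m1: "Cc MI FI (-1) n = Ind n n"
  by (simp add: Cc_def)

lemma Cc_0: "1 \<le> n \<Longrightarrow> Cc MI FI 0 n = Ind n (n - 1)"
  by (simp add: Cc_def nat_diff_distrib Let_def)

lemma Cc_1: "2 \<le> n \<Longrightarrow> Cc MI FI 1 n = Ind n (n - 2)"
  by (simp add: Cc_def nat_diff_distrib Let_def)

lemma Cc_degenerate: "int n < p + 1 \<Longrightarrow> Cc MI FI p n = tens {} hmul {} (MI 0) (mact FI 0)"
  by (simp add: Cc_def)

lemma Cc_comm_group: "-1 \<le> p \<Longrightarrow> comm_group (Cc MI FI p n)"
  by (cases "p + 1 \<le> int n")
    (simp_all add: Cc_eq Cc_degenerate tens_comm_group[OF Ind_wf] tens_comm_group[OF Ind_empty_wf])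

lemma Cc_group: "-1 \<le> p \<Longrightarrow> group (Cc MI FI p n)"
  using Cc_comm_group comm_group.axioms(2) by blast

lemma Cc_one_closed: "-1 \<le> p \<Longrightarrow> \<one>\<^bsub>Cc MI FI p n\<^esub> \<in> carrier (Cc MI FI p n)"
  using Cc_group group.is_monoid monoid.one_closed by blast

text \<open>Free-level form of the face map f_i with braid b_i: d_0 = - f_1 and d_1 = f_2 - f_1,
  where b_1 = 1 and b_2 = tau.\<close>

definition face_frag :: "nat \<Rightarrow> hs \<Rightarrow> hs \<times> 'v IVelem \<Rightarrow> (hs \<times> 'v IVelem \<Rightarrow>\<^sub>0 int)" where
  "face_frag k c = (\<lambda>(g, w). frag_of (hmul g c, iota FI k w))"

context
  fixes n k c
  assumes kn: "Suc k \<le> n" and c: "c \<in> hatS n" and c_central: "\<And>h. h \<in> hatS k \<Longrightarrow> hmul h c = hmul c h"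
begin

lemma face_frag_closed:
  "x \<in> hatS n \<Longrightarrow> w \<in> carrier (MI k) \<Longrightarrow> face_frag k c (x, w) \<in> carrier (TFc n (Suc k))"
  using hmul_closed[OF _ c] iota_closed by (simp add: face_frag_def)

lemma face_frag_act:
  assumes "x \<in> hatS n" "g \<in> hatS k" "w \<in> carrier (MI k)"
  shows "face_frag k c (hmul x g, w) - face_frag k c (x, mact FI k g w) \<in> TRc n (Suc k)"
proof -
  have "g \<in> hatS (Suc k)" using hatS_mono assms(2) by (meson le_SucI order_refl subsetD)
  then have "frag_of (hmul (hmul x c) g, iota FI k w) - frag_of (hmul x c, mact FI (Suc k) g (iota FI k w))
      \<in> frel (hatS n) hmul (hatS (Suc k)) (MI (Suc k)) (mact FI (Suc k))"
    unfolding frel_def using hmul_closed[OF assms(1) c] iota_closed[OF assms(3)] by blast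
  then show ?thesis
    using iota_mact[OF assms(2,3)] c_central[OF assms(2)]
    by (simp add: face_frag_def hmul_assoc frel_in_trel)
qed

lemma face_frag_mult:
  assumes "x \<in> hatS n" "w \<in> carrier (MI k)" "w' \<in> carrier (MI k)"
  shows "face_frag k c (x, w \<otimes>\<^bsub>MI k\<^esub> w') - face_frag k c (x, w) - face_frag k c (x, w') \<in> TRc n (Suc k)"
proof -
  have "frag_of (hmul x c, iota FI k w \<otimes>\<^bsub>MI (Suc k)\<^esub> iota FI k w') - frag_of (hmul x c, iota FI k w)
      - frag_of (hmul x c, iota FI k w') \<in> frel (hatS n) hmul (hatS (Suc k)) (MI (Suc k)) (mact FI (Suc k))"
    unfolding frel_def using hmul_closed[OF assms(1) c] iota_closed assms(2,3) by blast
  then show ?thesis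
    using iota_mult[OF assms(2,3)] by (simp add: face_frag_def frel_in_trel)
qed

end

lemma dmap_0_eq:
  "1 \<le> n \<Longrightarrow> dmap MI FI 0 n = qmap (TFc n n) (TRc n n) (frag_extend (\<lambda>x. - face_frag (n - 1) hone x))"
  by (simp add: dmap_def face_frag_def nat_diff_distrib split_def fun_eq_iff)

lemma dmap_1_eq:
  "2 \<le> n \<Longrightarrow> dmap MI FI 1 n = qmap (TFc n (n - 1)) (TRc n (n - 1))
      (frag_extend (\<lambda>x. face_frag (n - 2) (tau n) x - face_frag (n - 2) hone x))"
proof -
  assume n: "2 \<le> n"
  then have "nat (int n - 2) = n - 2" "Suc (n - 2) = n - 1" "{Suc 0..2} = {1::nat, 2}" by auto
  then show ?thesis
    using n by (simp add: dmap_def face_frag_def split_def fun_eq_iff tau_eq hmul_def hone_def Let_def)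
qed

context
  fixes k :: nat
begin

private lemma d0_frag_wf:
  shows "\<And>x w. x \<in> hatS (Suc k) \<Longrightarrow> w \<in> carrier (MI k) \<Longrightarrow>
      - face_frag k hone (x, w) \<in> carrier (TFc (Suc k) (Suc k))"
    and "\<And>x g w. x \<in> hatS (Suc k) \<Longrightarrow> g \<in> hatS k \<Longrightarrow> w \<in> carrier (MI k) \<Longrightarrow>
      - face_frag k hone (hmul x g, w) - - face_frag k hone (x, mact FI k g w) \<in> TRc (Suc k) (Suc k)"
    and "\<And>x w w'. x \<in> hatS (Suc k) \<Longrightarrow> w \<in> carrier (MI k) \<Longrightarrow> w' \<in> carrier (MI k) \<Longrightarrow>
      - face_frag k hone (x, w \<otimes>\<^bsub>MI k\<^esub> w') - - face_frag k hone (x, w) - - face_frag k hone (x, w')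
        \<in> TRc (Suc k) (Suc k)"
  using face_frag_closed[OF order_refl hone_in_hatS]
    trel_neg[OF Ind_wf[OF order_refl] face_frag_act[OF order_refl hone_in_hatS]]
    trel_neg[OF Ind_wf[OF order_refl] face_frag_mult[OF order_refl hone_in_hatS]]
  by (auto simp: algebra_simps)

lemma d0_hom_Suc: "dmap MI FI 0 (Suc k) \<in> hom (Ind (Suc k) k) (Ind (Suc k) (Suc k))"
  unfolding dmap_0_eq[of "Suc k", simplified]
  by (rule tens_map_hom[OF Ind_wf Ind_wf]) (use d0_frag_wf in auto)

lemma d0_tensor_Suc:
  assumes "g \<in> hatS (Suc k)" "w \<in> carrier (MI k)"
  shows "dmap MI FI 0 (Suc k) (ctens (Suc k) k g w)
    = inv\<^bsub>Ind (Suc k) (Suc k)\<^esub> ctens (Suc k) (Suc k) g (iota FI k w)"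
proof -
  have "dmap MI FI 0 (Suc k) (ctens (Suc k) k g w) = tclass (hatS (Suc k)) hmul (hatS (Suc k)) (MI (Suc k))
      (mact FI (Suc k)) (- frag_of (g, iota FI k w))"
    unfolding dmap_0_eq[of "Suc k", simplified] using assms
    by (subst tens_map_tclass[OF Ind_wf Ind_wf]) (use d0_frag_wf in \<open>auto simp: face_frag_def\<close>)
  then show ?thesis using tens_inv[OF Ind_wf[OF order_refl]] assms iota_closed by simp
qed

end

lemma d0_hom: "1 \<le> n \<Longrightarrow> dmap MI FI 0 n \<in> hom (Ind n (n - 1)) (Ind n n)"
  using d0_hom_Suc[of "n - 1"] by simp

lemma d0_tensor:
  assumes "1 \<le> n" "g \<in> hatS n" "w \<in> carrier (MI (n - 1))"
  shows "dmap MI FI 0 n (ctens n (n - 1) g w) = inv\<^bsub>Ind n n\<^esub> ctens n n g (iota FI (n - 1) w)"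
  using d0_tensor_Suc[of g "n - 1" w] assms by simp

context
  fixes k :: nat
begin

private abbreviation (input) "d1_frag \<equiv> \<lambda>x. face_frag k (tau (Suc (Suc k))) x - face_frag k hone x"

private lemma d1_frag_wf:
  shows "\<And>x w. x \<in> hatS (Suc (Suc k)) \<Longrightarrow> w \<in> carrier (MI k) \<Longrightarrow>
      d1_frag (x, w) \<in> carrier (TFc (Suc (Suc k)) (Suc k))"
    and "\<And>x g w. x \<in> hatS (Suc (Suc k)) \<Longrightarrow> g \<in> hatS k \<Longrightarrow> w \<in> carrier (MI k) \<Longrightarrow>
      d1_frag (hmul x g, w) - d1_frag (x, mact FI k g w) \<in> TRc (Suc (Suc k)) (Suc k)"
    and "\<And>x w w'. x \<in> hatS (Suc (Suc k)) \<Longrightarrow> w \<in> carrier (MI k) \<Longrightarrow> w' \<in> carrier (MI k) \<Longrightarrow>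
      d1_frag (x, w \<otimes>\<^bsub>MI k\<^esub> w') - d1_frag (x, w) - d1_frag (x, w') \<in> TRc (Suc (Suc k)) (Suc k)"
proof -
  let ?n = "Suc (Suc k)"
  have kn: "Suc k \<le> ?n" by simp
  have t: "tau ?n \<in> hatS ?n" "\<And>h. h \<in> hatS k \<Longrightarrow> hmul h (tau ?n) = hmul (tau ?n) h"
    using tau_in_hatS tau_commute[of ?n] by simp_all
  have wf: "tens_wf (hatS ?n) hmul (hatS (Suc k)) (MI (Suc k)) (mact FI (Suc k))" using Ind_wf[OF kn] .
  show "\<And>x w. x \<in> hatS ?n \<Longrightarrow> w \<in> carrier (MI k) \<Longrightarrow> d1_frag (x, w) \<in> carrier (TFc ?n (Suc k))"
    using face_frag_closed[OF kn t] face_frag_closed[OF kn hone_in_hatS] by auto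
  show "\<And>x g w. x \<in> hatS ?n \<Longrightarrow> g \<in> hatS k \<Longrightarrow> w \<in> carrier (MI k) \<Longrightarrow>
      d1_frag (hmul x g, w) - d1_frag (x, mact FI k g w) \<in> TRc ?n (Suc k)"
    using trel_diff[OF wf face_frag_act[OF kn t] face_frag_act[OF kn hone_in_hatS]]
    by (simp add: algebra_simps)
  show "\<And>x w w'. x \<in> hatS ?n \<Longrightarrow> w \<in> carrier (MI k) \<Longrightarrow> w' \<in> carrier (MI k) \<Longrightarrow>
      d1_frag (x, w \<otimes>\<^bsub>MI k\<^esub> w') - d1_frag (x, w) - d1_frag (x, w') \<in> TRc ?n (Suc k)"
    using trel_diff[OF wf face_frag_mult[OF kn t] face_frag_mult[OF kn hone_in_hatS]]
    by (simp add: algebra_simps)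
qed

lemma d1_hom_Suc_Suc: "dmap MI FI 1 (Suc (Suc k)) \<in> hom (Ind (Suc (Suc k)) k) (Ind (Suc (Suc k)) (Suc k))"
  unfolding dmap_1_eq[of "Suc (Suc k)", simplified]
  by (rule tens_map_hom[OF Ind_wf Ind_wf]) (use d1_frag_wf in auto)

lemma d1_tensor_Suc_Suc:
  assumes "a \<in> hatS (Suc (Suc k))" "w \<in> carrier (MI k)"
  shows "dmap MI FI 1 (Suc (Suc k)) (ctens (Suc (Suc k)) k a w)
    = ctens (Suc (Suc k)) (Suc k) (hmul a (tau (Suc (Suc k)))) (iota FI k w)
        \<otimes>\<^bsub>Ind (Suc (Suc k)) (Suc k)\<^esub>
        inv\<^bsub>Ind (Suc (Suc k)) (Suc k)\<^esub> ctens (Suc (Suc k)) (Suc k) a (iota FI k w)"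
proof -
  let ?n = "Suc (Suc k)"
  have wf: "tens_wf (hatS ?n) hmul (hatS (Suc k)) (MI (Suc k)) (mact FI (Suc k))" using Ind_wf by simp
  have c: "frag_of (hmul a (tau ?n), iota FI k w) \<in> carrier (TFc ?n (Suc k))"
    "frag_of (a, iota FI k w) \<in> carrier (TFc ?n (Suc k))"
    using assms hmul_closed tau_in_hatS iota_closed by auto
  have "dmap MI FI 1 ?n (ctens ?n k a w) = tclass (hatS ?n) hmul (hatS (Suc k)) (MI (Suc k))
      (mact FI (Suc k)) (frag_of (hmul a (tau ?n), iota FI k w) - frag_of (a, iota FI k w))"
    unfolding dmap_1_eq[of ?n, simplified] using assms
    by (subst tens_map_tclass[OF Ind_wf Ind_wf]) (use d1_frag_wf in \<open>auto simp: face_frag_def\<close>)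
  then show ?thesis using tens_mult[OF wf c(1) tfree_closed(3)[OF c(2)]] tens_inv[OF wf c(2)] by simp
qed

end

lemma d1_hom: "2 \<le> n \<Longrightarrow> dmap MI FI 1 n \<in> hom (Ind n (n - 2)) (Ind n (n - 1))"
  using d1_hom_Suc_Suc[of "n - 2"] by (simp add: numeral_2_eq_2 Suc_diff_Suc)

lemma d1_tensor:
  assumes "2 \<le> n" "a \<in> hatS n" "w \<in> carrier (MI (n - 2))"
  shows "dmap MI FI 1 n (ctens n (n - 2) a w)
    = ctens n (n - 1) (hmul a (tau n)) (iota FI (n - 2) w)
        \<otimes>\<^bsub>Ind n (n - 1)\<^esub> inv\<^bsub>Ind n (n - 1)\<^esub> ctens n (n - 1) a (iota FI (n - 2) w)"
proof -
  obtain k where "n = Suc (Suc k)" using assms(1) by (metis add_2_eq_Suc le_Suc_ex)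
  then show ?thesis using d1_tensor_Suc_Suc[of a k w] assms by simp
qed

definition im_d0 :: "nat \<Rightarrow> (hs \<times> 'v IVelem \<Rightarrow>\<^sub>0 int) set set" where
  "im_d0 n = dmap MI FI 0 n ` carrier (Cc MI FI 0 n)"

definition im_d1 :: "nat \<Rightarrow> (hs \<times> 'v IVelem \<Rightarrow>\<^sub>0 int) set set" where
  "im_d1 n = dmap MI FI 1 n ` carrier (Cc MI FI 1 n)"

lemma im_d0_normal: "im_d0 n \<lhd> Ind n n"
proof (cases "1 \<le> n")
  case True
  interpret d0: group_hom "Ind n (n - 1)" "Ind n n" "dmap MI FI 0 n"
    using group_homI[OF Ind_group Ind_group d0_hom[OF True]] by simp
  show ?thesis
    using comm_group.subgroup_imp_normal[OF tens_comm_group[OF Ind_wf] d0.img_is_subgroup]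
    by (simp add: im_d0_def Cc_0[OF True])
next
  case False
  then have "im_d0 n = {\<one>\<^bsub>Ind n n\<^esub>}" using Cc_one_closed[of 0 n] by (auto simp: im_d0_def dmap_def Cc_m1)
  then show ?thesis
    using comm_group.subgroup_imp_normal[OF tens_comm_group group.triv_subgroup[OF Ind_group]] Ind_wf
    by simp
qed

lemma im_d1_normal: "im_d1 n \<lhd> Cc MI FI 0 n"
proof (cases "2 \<le> n")
  case True
  interpret d1: group_hom "Ind n (n - 2)" "Ind n (n - 1)" "dmap MI FI 1 n"
    using group_homI[OF Ind_group Ind_group d1_hom[OF True]] by simp
  show ?thesis
    using comm_group.subgroup_imp_normal[OF tens_comm_group[OF Ind_wf] d1.img_is_subgroup] True
    by (simp add: im_d1_def Cc_0 Cc_1)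
next
  case False
  then have "im_d1 n = {\<one>\<^bsub>Cc MI FI 0 n\<^esub>}" using Cc_one_closed[of 1 n] by (auto simp: im_d1_def dmap_def)
  then show ?thesis
    using comm_group.subgroup_imp_normal[OF Cc_comm_group group.triv_subgroup[OF Cc_group]] by simp
qed

section \<open>Homology in degree -1\<close>

text \<open>A morphism N -> N is a singleton {t}, so SOME recovers its unique representative.\<close>

definition top_eval :: "nat \<Rightarrow> (hs set \<times> 'v \<Rightarrow>\<^sub>0 int) set \<Rightarrow> 'v" where
  "top_eval N = tlift (V N) (\<lambda>(f, v). A N (SOME h. h \<in> f) v) (FIhat N N) (V N)"

context
  fixes N :: nat
begin

private lemma top_eval_wf:
  shows "\<And>f v. f \<in> FIhat N N \<Longrightarrow> v \<in> carrier (V N) \<Longrightarrow> A N (SOME h. h \<in> f) v \<in> carrier (V N)"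
    and "\<And>f k v. f \<in> FIhat N N \<Longrightarrow> k \<in> hatS N \<Longrightarrow> v \<in> carrier (V N) \<Longrightarrow>
      A N (SOME h. h \<in> firact N N f k) v = A N (SOME h. h \<in> f) (A N k v)"
    and "\<And>f v v'. f \<in> FIhat N N \<Longrightarrow> v \<in> carrier (V N) \<Longrightarrow> v' \<in> carrier (V N) \<Longrightarrow>
      A N (SOME h. h \<in> f) (v \<otimes>\<^bsub>V N\<^esub> v') = A N (SOME h. h \<in> f) v \<otimes>\<^bsub>V N\<^esub> A N (SOME h. h \<in> f) v'"
proof -
  show "\<And>f v. f \<in> FIhat N N \<Longrightarrow> v \<in> carrier (V N) \<Longrightarrow> A N (SOME h. h \<in> f) v \<in> carrier (V N)"
    by (auto simp: FIhat_iff hcos_same A_closed)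
  show "\<And>f v v'. f \<in> FIhat N N \<Longrightarrow> v \<in> carrier (V N) \<Longrightarrow> v' \<in> carrier (V N) \<Longrightarrow>
      A N (SOME h. h \<in> f) (v \<otimes>\<^bsub>V N\<^esub> v') = A N (SOME h. h \<in> f) v \<otimes>\<^bsub>V N\<^esub> A N (SOME h. h \<in> f) v'"
    by (auto simp: FIhat_iff hcos_same A_mult)
next
  fix f k v assume "f \<in> FIhat N N" "k \<in> hatS N" "v \<in> carrier (V N)"
  moreover obtain t where "t \<in> hatS N" "f = hcos N N t" using \<open>f \<in> FIhat N N\<close> by (auto simp: FIhat_iff)
  ultimately show "A N (SOME h. h \<in> firact N N f k) v = A N (SOME h. h \<in> f) (A N k v)"
    using firact_hcos[OF order_refl \<open>t \<in> hatS N\<close> \<open>k \<in> hatS N\<close>] by (simp add: hcos_same A_hmul)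
qed

lemma top_eval_hom: "top_eval N \<in> hom (Ic N N) (V N)"
  unfolding top_eval_def Icomp_eq
  by (rule tlift_hom[OF Ic_wf V_comm_group]) (use top_eval_wf in auto)

lemma top_eval_tensor:
  assumes "t \<in> hatS N" "v \<in> carrier (V N)"
  shows "top_eval N (itens N N (hcos N N t) v) = A N t v"
proof -
  have "top_eval N (itens N N (hcos N N t) v) = (\<lambda>(f, v). A N (SOME h. h \<in> f) v) (hcos N N t, v)"
    unfolding top_eval_def
    by (rule tlift_tensor[OF Ic_wf V_comm_group])
      (use top_eval_wf hcos_in_FIhat[OF order_refl assms(1)] assms(2) in auto)
  then show ?thesis by (simp add: hcos_same)
qed

end

lemma top_eval_one: "top_eval N \<one>\<^bsub>Ic N N\<^esub> = \<one>\<^bsub>V N\<^esub>"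
  using group_hom.hom_one[OF group_homI[OF Ic_group V_group top_eval_hom]] .

lemma top_eval_postcomp:
  assumes "k \<in> hatS N" "z \<in> carrier (Ic N N)"
  shows "top_eval N (postcomp N N N (hcos N N k) z) = A N k (top_eval N z)"
proof -
  have "(top_eval N \<circ> postcomp N N N (hcos N N k)) z = (A N k \<circ> top_eval N) z"
  proof (rule Ic_hom_eqI[OF V_group _ _ _ assms(2)])
    show "top_eval N \<circ> postcomp N N N (hcos N N k) \<in> hom (Ic N N) (V N)"
      using hom_compose[OF postcomp_hom[OF order_refl hcos_in_FIhat[OF order_refl assms(1)]] top_eval_hom] .
    show "A N k \<circ> top_eval N \<in> hom (Ic N N) (V N)"
      using hom_compose[OF top_eval_hom A_hom[OF assms(1)]] .
  next
    fix s v assume "s \<in> hatS N" "v \<in> carrier (V N)"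
    then show "(top_eval N \<circ> postcomp N N N (hcos N N k)) (itens N N (hcos N N s) v)
        = (A N k \<circ> top_eval N) (itens N N (hcos N N s) v)"
      using assms postcomp_hcos[OF order_refl order_refl _ assms(1)]
      by (simp add: top_eval_tensor hmul_closed A_hmul)
  qed
  then show ?thesis by simp
qed

definition ev :: "nat \<Rightarrow> (hs \<times> 'v IVelem \<Rightarrow>\<^sub>0 int) set \<Rightarrow> 'v" where
  "ev N = tlift (V N) (\<lambda>(g, y). A N g (top_eval N (y N))) (hatS N) (MI N)"

context
  fixes N :: nat
begin

private lemma ev_wf:
  shows "\<And>g y. g \<in> hatS N \<Longrightarrow> y \<in> carrier (MI N) \<Longrightarrow> A N g (top_eval N (y N)) \<in> carrier (V N)"
    and "\<And>g k y. g \<in> hatS N \<Longrightarrow> k \<in> hatS N \<Longrightarrow> y \<in> carrier (MI N) \<Longrightarrow>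
      A N (hmul g k) (top_eval N (y N)) = A N g (top_eval N (mact FI N k y N))"
    and "\<And>g y y'. g \<in> hatS N \<Longrightarrow> y \<in> carrier (MI N) \<Longrightarrow> y' \<in> carrier (MI N) \<Longrightarrow>
      A N g (top_eval N ((y \<otimes>\<^bsub>MI N\<^esub> y') N))
        = A N g (top_eval N (y N)) \<otimes>\<^bsub>V N\<^esub> A N g (top_eval N (y' N))"
proof -
  have c: "y \<in> carrier (MI N) \<Longrightarrow> top_eval N (y N) \<in> carrier (V N)" for y
    using hom_in_carrier[OF top_eval_hom IV_component_closed] by blast
  show "\<And>g y. g \<in> hatS N \<Longrightarrow> y \<in> carrier (MI N) \<Longrightarrow> A N g (top_eval N (y N)) \<in> carrier (V N)"
    using c A_closed by blast
  show "\<And>g k y. g \<in> hatS N \<Longrightarrow> k \<in> hatS N \<Longrightarrow> y \<in> carrier (MI N) \<Longrightarrow>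
      A N (hmul g k) (top_eval N (y N)) = A N g (top_eval N (mact FI N k y N))"
    using c by (simp add: mact_def IVmor_eq top_eval_postcomp IV_component_closed A_hmul)
  show "\<And>g y y'. g \<in> hatS N \<Longrightarrow> y \<in> carrier (MI N) \<Longrightarrow> y' \<in> carrier (MI N) \<Longrightarrow>
      A N g (top_eval N ((y \<otimes>\<^bsub>MI N\<^esub> y') N))
        = A N g (top_eval N (y N)) \<otimes>\<^bsub>V N\<^esub> A N g (top_eval N (y' N))"
    using c hom_mult[OF top_eval_hom IV_component_closed IV_component_closed]
    by (simp add: IV_mult A_mult)
qed

lemma ev_hom: "ev N \<in> hom (Ind N N) (V N)"
  unfolding ev_def
  by (rule tlift_hom[OF Ind_wf[OF order_refl] V_comm_group]) (use ev_wf in auto)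

lemma ev_tensor:
  assumes "g \<in> hatS N" "y \<in> carrier (MI N)"
  shows "ev N (ctens N N g y) = A N g (top_eval N (y N))"
  unfolding ev_def using assms
  by (subst tlift_tensor[OF Ind_wf[OF order_refl] V_comm_group]) (use ev_wf in auto)

end

lemma ev_im_d0:
  assumes "t \<in> im_d0 N"
  shows "ev N t = \<one>\<^bsub>V N\<^esub>"
proof (cases "1 \<le> N")
  case False
  then have "t = \<one>\<^bsub>Ind N N\<^esub>" using assms by (auto simp: im_d0_def dmap_def Cc_m1)
  then show ?thesis using group_hom.hom_one[OF group_homI[OF Ind_group[OF order_refl] V_group ev_hom]] by simp
next
  case True
  obtain X where X: "X \<in> carrier (Cc MI FI 0 N)" "t = dmap MI FI 0 N X"
    using assms by (auto simp: im_d0_def)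
  have "(ev N \<circ> dmap MI FI 0 N) X = (\<lambda>_. \<one>\<^bsub>V N\<^esub>) X"
  proof (rule Ind_hom_eqI[of "N - 1" N, OF _ V_group])
    show "ev N \<circ> dmap MI FI 0 N \<in> hom (Ind N (N - 1)) (V N)"
      using hom_compose[OF d0_hom[OF True] ev_hom] .
    show "(\<lambda>_. \<one>\<^bsub>V N\<^esub>) \<in> hom (Ind N (N - 1)) (V N)"
      by (rule homI) (simp_all add: group.is_monoid[OF V_group] monoid.one_closed)
  next
    fix g w assume gw: "g \<in> hatS N" "w \<in> carrier (MI (N - 1))"
    then have iw: "iota FI (N - 1) w \<in> carrier (MI N)" using iota_closed[OF gw(2)] True by simp
    have "iota FI (N - 1) w N = \<one>\<^bsub>Ic N N\<^esub>" using iota_top[of "N - 1" w] True by simp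
    then show "(ev N \<circ> dmap MI FI 0 N) (ctens N (N - 1) g w) = (\<lambda>_. \<one>\<^bsub>V N\<^esub>) (ctens N (N - 1) g w)"
      using d0_tensor[OF True gw] ev_tensor[OF gw(1) iw] ctens_closed[OF gw(1) iw] gw(1)
        top_eval_one group_hom.hom_one[OF group_homI[OF V_group V_group A_hom[OF gw(1)]]]
        group_hom.hom_inv[OF group_homI[OF Ind_group[OF order_refl] V_group ev_hom]]
        monoid.inv_one[OF group.is_monoid[OF V_group]]
      by simp
  qed (use X True Cc_0 in simp_all)
  then show ?thesis using X by simp
qed

abbreviation "Hm1 N \<equiv> Hcs MI FI (-1) N"

lemma Hm1_eq: "Hm1 N = Ind N N Mod im_d0 N"
  by (simp add: Hcs_def im_d0_def Cc_m1)

lemma Hm1_group: "group (Hm1 N)"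
  unfolding Hm1_eq using normal.factorgroup_is_group[OF im_d0_normal] .

lemma Hm1_proj_hom: "(\<lambda>c. im_d0 N #>\<^bsub>Ind N N\<^esub> c) \<in> hom (Ind N N) (Hm1 N)"
  unfolding Hm1_eq using normal.r_coset_hom_Mod[OF im_d0_normal] .

definition Hm1_to_V :: "nat \<Rightarrow> (hs \<times> 'v IVelem \<Rightarrow>\<^sub>0 int) set set \<Rightarrow> 'v" where
  "Hm1_to_V N = qlift (ev N)"

lemma Hm1_to_V_hom: "Hm1_to_V N \<in> hom (Hm1 N) (V N)"
  unfolding Hm1_eq Hm1_to_V_def using normal.qlift_hom[OF im_d0_normal V_group ev_hom ev_im_d0] .

lemma Hm1_to_V_rcos:
  "c \<in> carrier (Ind N N) \<Longrightarrow> Hm1_to_V N (im_d0 N #>\<^bsub>Ind N N\<^esub> c) = ev N c"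
  unfolding Hm1_to_V_def using normal.qlift_rcos[OF im_d0_normal V_group ev_hom ev_im_d0] .

definition V_to_Hm1 :: "nat \<Rightarrow> 'v \<Rightarrow> (hs \<times> 'v IVelem \<Rightarrow>\<^sub>0 int) set set" where
  "V_to_Hm1 N v = im_d0 N #>\<^bsub>Ind N N\<^esub> ctens N N hone (incl N N (itens N N (hcos N N hone) v))"

lemma V_to_Hm1_hom: "V_to_Hm1 N \<in> hom (V N) (Hm1 N)"
proof -
  have "(\<lambda>c. im_d0 N #>\<^bsub>Ind N N\<^esub> c) \<circ> ctens N N hone \<circ> incl N N \<circ> itens N N (hcos N N hone)
      \<in> hom (V N) (Hm1 N)"
    using hom_compose[OF hom_compose[OF hom_compose[OF itens_hom incl_hom] ctens_hom] Hm1_proj_hom]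
    by (simp add: comp_assoc)
  then show ?thesis unfolding V_to_Hm1_def comp_def .
qed

lemma Hm1_to_V_V_to_Hm1:
  assumes "v \<in> carrier (V N)"
  shows "Hm1_to_V N (V_to_Hm1 N v) = v"
proof -
  have "incl N N (itens N N (hcos N N hone) v) \<in> carrier (MI N)"
    using incl_closed[OF order_refl itens_closed[OF order_refl hone_in_hatS assms]] .
  then show ?thesis
    unfolding V_to_Hm1_def using assms
    by (simp add: Hm1_to_V_rcos ctens_closed ev_tensor top_eval_tensor A_hone)
qed

lemma ctens_top_summand:
  assumes "g \<in> hatS N" "t \<in> hatS N" "v \<in> carrier (V N)"
  shows "ctens N N g (incl N N (itens N N (hcos N N t) v))
       = ctens N N hone (incl N N (itens N N (hcos N N hone) (A N g (A N t v))))"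
proof -
  have "ctens N N g (incl N N (itens N N (hcos N N t) v))
      = ctens N N hone (mact FI N g (incl N N (itens N N (hcos N N t) v)))"
    using ctens_act[OF order_refl hone_in_hatS assms(1) incl_closed[OF order_refl itens_closed]] assms
    by simp
  also have "\<dots> = ctens N N hone (incl N N (itens N N (hcos N N (hmul hone (hmul g t))) v))"
    using mact_incl_itens[OF order_refl assms] by simp
  also have "\<dots> = ctens N N hone (incl N N (itens N N (hcos N N hone) (A N g (A N t v))))"
    using itens_act[OF order_refl hone_in_hatS hmul_closed[OF assms(1,2)] assms(3)] assms A_hmul by simp
  finally show ?thesis .
qed

lemma ctens_lower_summand_in_im_d0:
  assumes "j < N" "g \<in> hatS N" "s \<in> hatS N" "v \<in> carrier (V j)"
  shows "ctens N N g (incl N j (itens j N (hcos N j s) v)) \<in> im_d0 N"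
proof -
  obtain k where N: "N = Suc k" using assms(1) by (cases N) auto
  have jk: "j \<le> k" using assms(1) N by simp
  define E where "E = incl k j (itens j k (hcos k j hone) v)"
  have E: "E \<in> carrier (MI k)" unfolding E_def using incl_closed[OF jk itens_closed[OF jk hone_in_hatS assms(4)]] .
  have gs: "hmul g s \<in> hatS N" using hmul_closed assms by blast
  interpret d0: group_hom "Ind N k" "Ind N N" "dmap MI FI 0 N"
    using group_homI[OF Ind_group Ind_group d0_hom[of N]] N by simp
  have c: "ctens N k (hmul g s) E \<in> carrier (Ind N k)" using ctens_closed[OF gs E] .
  have "dmap MI FI 0 N (inv\<^bsub>Ind N k\<^esub> ctens N k (hmul g s) E)
      = inv\<^bsub>Ind N N\<^esub> (inv\<^bsub>Ind N N\<^esub> ctens N N (hmul g s) (iota FI k E))"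
    using d0.hom_inv[OF c] d0_tensor[of N "hmul g s" E] N gs E by simp
  also have "\<dots> = ctens N N (hmul g s) (iota FI k E)"
    using group.inv_inv[OF Ind_group[OF order_refl]] ctens_closed[OF gs iota_closed[OF E, folded N]]
    by simp
  also have "\<dots> = ctens N N g (mact FI N s (incl N j (itens j N (hcos N j hone) v)))"
    unfolding E_def using iota_incl_itens[OF jk hone_in_hatS assms(4)] ctens_act[OF order_refl assms(2,3)]
      incl_closed itens_closed assms N by simp
  also have "\<dots> = ctens N N g (incl N j (itens j N (hcos N j s) v))"
    using mact_incl_itens[of j N s hone v] assms by simp
  finally have "dmap MI FI 0 N (inv\<^bsub>Ind N k\<^esub> ctens N k (hmul g s) E)
      = ctens N N g (incl N j (itens j N (hcos N j s) v))" .
  moreover have "inv\<^bsub>Ind N k\<^esub> ctens N k (hmul g s) E \<in> carrier (Cc MI FI 0 N)"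
    using d0.G.inv_closed[OF c] Cc_0[of N] N by simp
  ultimately show ?thesis unfolding im_d0_def by (metis image_eqI)
qed

lemma IV_proj_hom: "j \<le> m \<Longrightarrow> (\<lambda>y. y j) \<in> hom (MI m) (Ic j m)"
  by (rule homI) (auto simp: IV_carrier IV_mult PiE_iff)

lemma Hm1_one: "\<one>\<^bsub>Hm1 N\<^esub> = im_d0 N"
  unfolding Hm1_eq by simp

lemma V_to_Hm1_one: "V_to_Hm1 N \<one>\<^bsub>V N\<^esub> = \<one>\<^bsub>Hm1 N\<^esub>"
  using group_hom.hom_one[OF group_homI[OF V_group Hm1_group V_to_Hm1_hom]] .

lemma im_d0_rcos_lower_summand:
  assumes g: "g \<in> hatS N" and j: "j < N" and z: "z \<in> carrier (Ic j N)"
  shows "im_d0 N #>\<^bsub>Ind N N\<^esub> ctens N N g (incl N j z) = \<one>\<^bsub>Hm1 N\<^esub>"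
proof -
  have "((\<lambda>c. im_d0 N #>\<^bsub>Ind N N\<^esub> c) \<circ> ctens N N g \<circ> incl N j) z = (\<lambda>_. \<one>\<^bsub>Hm1 N\<^esub>) z"
  proof (rule Ic_hom_eqI[OF Hm1_group _ _ _ z])
    show "(\<lambda>c. im_d0 N #>\<^bsub>Ind N N\<^esub> c) \<circ> ctens N N g \<circ> incl N j \<in> hom (Ic j N) (Hm1 N)"
      using hom_compose[OF hom_compose[OF incl_hom ctens_hom[OF order_refl g]] Hm1_proj_hom] j
      by (simp add: comp_assoc)
    show "(\<lambda>_. \<one>\<^bsub>Hm1 N\<^esub>) \<in> hom (Ic j N) (Hm1 N)"
      by (rule homI) (simp_all add: group.is_monoid[OF Hm1_group] monoid.one_closed)
  next
    fix s v assume "s \<in> hatS N" "v \<in> carrier (V j)"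
    then show "((\<lambda>c. im_d0 N #>\<^bsub>Ind N N\<^esub> c) \<circ> ctens N N g \<circ> incl N j) (itens j N (hcos N j s) v)
        = (\<lambda>_. \<one>\<^bsub>Hm1 N\<^esub>) (itens j N (hcos N j s) v)"
      using ctens_lower_summand_in_im_d0[OF j g] Hm1_one
        group.coset_join2[OF Ind_group[OF order_refl] _ normal.axioms(1)[OF im_d0_normal]]
        subgroup.mem_carrier[OF normal.axioms(1)[OF im_d0_normal]]
      by simp
  qed
  then show ?thesis by simp
qed

lemma V_to_Hm1_top_summand:
  assumes g: "g \<in> hatS N" and z: "z \<in> carrier (Ic N N)"
  shows "V_to_Hm1 N (A N g (top_eval N z)) = im_d0 N #>\<^bsub>Ind N N\<^esub> ctens N N g (incl N N z)"
proof -
  have "(V_to_Hm1 N \<circ> A N g \<circ> top_eval N) z = ((\<lambda>c. im_d0 N #>\<^bsub>Ind N N\<^esub> c) \<circ> ctens N N g \<circ> incl N N) z"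
  proof (rule Ic_hom_eqI[OF Hm1_group _ _ _ z])
    show "V_to_Hm1 N \<circ> A N g \<circ> top_eval N \<in> hom (Ic N N) (Hm1 N)"
      using hom_compose[OF hom_compose[OF top_eval_hom A_hom[OF g]] V_to_Hm1_hom] by (simp add: comp_assoc)
    show "(\<lambda>c. im_d0 N #>\<^bsub>Ind N N\<^esub> c) \<circ> ctens N N g \<circ> incl N N \<in> hom (Ic N N) (Hm1 N)"
      using hom_compose[OF hom_compose[OF incl_hom[OF order_refl] ctens_hom[OF order_refl g]] Hm1_proj_hom]
      by (simp add: comp_assoc)
  next
    fix t v assume "t \<in> hatS N" "v \<in> carrier (V N)"
    then show "(V_to_Hm1 N \<circ> A N g \<circ> top_eval N) (itens N N (hcos N N t) v)
        = ((\<lambda>c. im_d0 N #>\<^bsub>Ind N N\<^esub> c) \<circ> ctens N N g \<circ> incl N N) (itens N N (hcos N N t) v)"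
      using ctens_top_summand[OF g] by (simp add: top_eval_tensor V_to_Hm1_def)
  qed
  then show ?thesis by simp
qed

lemma V_to_Hm1_ev_incl:
  assumes g: "g \<in> hatS N" and j: "j \<le> N" and z: "z \<in> carrier (Ic j N)"
  shows "V_to_Hm1 N (A N g (top_eval N (incl N j z N))) = im_d0 N #>\<^bsub>Ind N N\<^esub> ctens N N g (incl N j z)"
proof (cases "j = N")
  case True
  then show ?thesis using V_to_Hm1_top_summand[OF g] z by simp
next
  case False
  then have "top_eval N (incl N j z N) = \<one>\<^bsub>V N\<^esub>" using j by (simp add: top_eval_one)
  then show ?thesis
    using im_d0_rcos_lower_summand[OF g _ z] False j V_to_Hm1_one
      group_hom.hom_one[OF group_homI[OF V_group V_group A_hom[OF g]]] by simp
qed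

lemma V_to_Hm1_ev_tensor:
  assumes g: "g \<in> hatS N" and y: "y \<in> carrier (MI N)"
  shows "V_to_Hm1 N (A N g (top_eval N (y N))) = im_d0 N #>\<^bsub>Ind N N\<^esub> ctens N N g y"
proof -
  have lhs_hom: "V_to_Hm1 N \<circ> A N g \<circ> top_eval N \<circ> (\<lambda>y. y N) \<in> hom (MI N) (Hm1 N)"
    using hom_compose[OF hom_compose[OF hom_compose[OF IV_proj_hom[OF order_refl] top_eval_hom]
          A_hom[OF g]] V_to_Hm1_hom]
    by (simp add: comp_assoc)
  have rhs_hom: "(\<lambda>c. im_d0 N #>\<^bsub>Ind N N\<^esub> c) \<circ> ctens N N g \<in> hom (MI N) (Hm1 N)"
    using hom_compose[OF ctens_hom[OF order_refl g] Hm1_proj_hom] .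
  have "(V_to_Hm1 N \<circ> A N g \<circ> top_eval N \<circ> (\<lambda>y. y N)) y
      = ((\<lambda>c. im_d0 N #>\<^bsub>Ind N N\<^esub> c) \<circ> ctens N N g) y"
    by (rule IV_hom_eqI[OF Hm1_group lhs_hom rhs_hom _ y]) (simp add: V_to_Hm1_ev_incl[OF g])
  then show ?thesis by simp
qed

lemma V_to_Hm1_ev:
  assumes "c \<in> carrier (Ind N N)"
  shows "V_to_Hm1 N (ev N c) = im_d0 N #>\<^bsub>Ind N N\<^esub> c"
proof -
  have "(V_to_Hm1 N \<circ> ev N) c = im_d0 N #>\<^bsub>Ind N N\<^esub> c"
    by (rule Ind_hom_eqI[OF order_refl Hm1_group hom_compose[OF ev_hom V_to_Hm1_hom] Hm1_proj_hom _ assms])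
      (simp add: ev_tensor V_to_Hm1_ev_tensor)
  then show ?thesis by simp
qed

lemma V_to_Hm1_Hm1_to_V:
  assumes "Y \<in> carrier (Hm1 N)"
  shows "V_to_Hm1 N (Hm1_to_V N Y) = Y"
proof -
  obtain c where "c \<in> carrier (Ind N N)" "Y = im_d0 N #>\<^bsub>Ind N N\<^esub> c"
    using assms unfolding Hm1_eq by (auto simp: carrier_FactGroup)
  then show ?thesis using Hm1_to_V_rcos V_to_Hm1_ev by simp
qed

lemma Hm1_to_V_iso: "Hm1_to_V N \<in> iso (Hm1 N) (V N)"
proof -
  have "inj_on (Hm1_to_V N) (carrier (Hm1 N))"
    by (rule inj_on_inverseI[of _ "V_to_Hm1 N"]) (rule V_to_Hm1_Hm1_to_V)
  moreover have "Hm1_to_V N ` carrier (Hm1 N) = carrier (V N)"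
    using hom_in_carrier[OF Hm1_to_V_hom] hom_in_carrier[OF V_to_Hm1_hom] Hm1_to_V_V_to_Hm1
    by (auto intro!: image_eqI)
  ultimately show ?thesis unfolding iso_def bij_betw_def using Hm1_to_V_hom by blast
qed

context
  fixes N :: nat and g :: hs
  assumes g: "g \<in> hatS N"
begin

private lemma Cact_wf:
  shows "\<And>x w. x \<in> hatS N \<Longrightarrow> w \<in> carrier (MI N) \<Longrightarrow> frag_of (hmul g x, w) \<in> carrier (TFc N N)"
    and "\<And>x k w. x \<in> hatS N \<Longrightarrow> k \<in> hatS N \<Longrightarrow> w \<in> carrier (MI N) \<Longrightarrow>
      frag_of (hmul g (hmul x k), w) - frag_of (hmul g x, mact FI N k w) \<in> TRc N N"
    and "\<And>x w w'. x \<in> hatS N \<Longrightarrow> w \<in> carrier (MI N) \<Longrightarrow> w' \<in> carrier (MI N) \<Longrightarrow>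
      frag_of (hmul g x, w \<otimes>\<^bsub>MI N\<^esub> w') - frag_of (hmul g x, w) - frag_of (hmul g x, w') \<in> TRc N N"
proof -
  show "\<And>x w. x \<in> hatS N \<Longrightarrow> w \<in> carrier (MI N) \<Longrightarrow> frag_of (hmul g x, w) \<in> carrier (TFc N N)"
    using hmul_closed[OF g] by simp
next
  fix x k w assume "x \<in> hatS N" "k \<in> hatS N" "w \<in> carrier (MI N)"
  then have "frag_of (hmul (hmul g x) k, w) - frag_of (hmul g x, mact FI N k w)
      \<in> frel (hatS N) hmul (hatS N) (MI N) (mact FI N)"
    unfolding frel_def using hmul_closed[OF g] by blast
  then show "frag_of (hmul g (hmul x k), w) - frag_of (hmul g x, mact FI N k w) \<in> TRc N N"
    by (simp add: hmul_assoc frel_in_trel)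
next
  fix x w w' assume "x \<in> hatS N" "w \<in> carrier (MI N)" "w' \<in> carrier (MI N)"
  then have "frag_of (hmul g x, w \<otimes>\<^bsub>MI N\<^esub> w') - frag_of (hmul g x, w) - frag_of (hmul g x, w')
      \<in> frel (hatS N) hmul (hatS N) (MI N) (mact FI N)"
    unfolding frel_def using hmul_closed[OF g] by blast
  then show "frag_of (hmul g x, w \<otimes>\<^bsub>MI N\<^esub> w') - frag_of (hmul g x, w) - frag_of (hmul g x, w') \<in> TRc N N"
    by (rule frel_in_trel)
qed

lemma Cact_eq: "Cact MI FI (-1) N g = qmap (TFc N N) (TRc N N) (frag_extend (\<lambda>(h, w). frag_of (hmul g h, w)))"
  by (simp add: Cact_def fun_eq_iff)

lemma Cact_hom: "Cact MI FI (-1) N g \<in> hom (Ind N N) (Ind N N)"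
  unfolding Cact_eq by (rule tens_map_hom[OF Ind_wf Ind_wf]) (use Cact_wf in auto)

lemma Cact_tensor:
  assumes "h \<in> hatS N" "y \<in> carrier (MI N)"
  shows "Cact MI FI (-1) N g (ctens N N h y) = ctens N N (hmul g h) y"
  unfolding Cact_eq using assms
  by (subst tens_map_tclass[OF Ind_wf Ind_wf]) (use Cact_wf in auto)

lemma ev_Cact:
  assumes "c \<in> carrier (Ind N N)"
  shows "ev N (Cact MI FI (-1) N g c) = A N g (ev N c)"
proof -
  have "(ev N \<circ> Cact MI FI (-1) N g) c = (A N g \<circ> ev N) c"
  proof (rule Ind_hom_eqI[OF order_refl V_group hom_compose[OF Cact_hom ev_hom]
        hom_compose[OF ev_hom A_hom[OF g]] _ assms])
    fix h y assume "h \<in> hatS N" "y \<in> carrier (MI N)"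
    then show "(ev N \<circ> Cact MI FI (-1) N g) (ctens N N h y) = (A N g \<circ> ev N) (ctens N N h y)"
      using hom_in_carrier[OF top_eval_hom IV_component_closed[OF _ order_refl]]
      by (simp add: Cact_tensor ev_tensor hmul_closed[OF g] A_hmul[OF g])
  qed
  then show ?thesis by simp
qed

lemma Hm1_to_V_equivariant:
  assumes "Y \<in> carrier (Hm1 N)"
  shows "Hm1_to_V N (Hact_m1 MI FI N g Y) = A N g (Hm1_to_V N Y)"
proof -
  obtain c where c: "c \<in> carrier (Ind N N)" "Y = im_d0 N #>\<^bsub>Ind N N\<^esub> c"
    using assms unfolding Hm1_eq by (auto simp: carrier_FactGroup)
  let ?c = "SOME x. x \<in> Y"
  have c': "?c \<in> carrier (Ind N N)" "im_d0 N #>\<^bsub>Ind N N\<^esub> ?c = Y"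
    using normal.some_in_rcos[OF im_d0_normal c(1)] c(2) by auto
  have "Hact_m1 MI FI N g Y = im_d0 N #>\<^bsub>Ind N N\<^esub> Cact MI FI (-1) N g ?c"
    by (simp add: Hact_m1_def qmap_def im_d0_def Cc_m1)
  then have "Hm1_to_V N (Hact_m1 MI FI N g Y) = ev N (Cact MI FI (-1) N g ?c)"
    using Hm1_to_V_rcos hom_in_carrier[OF Cact_hom c'(1)] by simp
  also have "\<dots> = A N g (Hm1_to_V N Y)" using ev_Cact[OF c'(1)] Hm1_to_V_rcos[OF c'(1)] c'(2) by simp
  finally show ?thesis .
qed

end

section \<open>Homology in degree 0\<close>

definition Q0 :: "nat \<Rightarrow> (hs \<times> 'v IVelem \<Rightarrow>\<^sub>0 int) set set monoid" where
  "Q0 N = Cc MI FI 0 N Mod im_d1 N"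

definition q0 :: "nat \<Rightarrow> (hs \<times> 'v IVelem \<Rightarrow>\<^sub>0 int) set \<Rightarrow> (hs \<times> 'v IVelem \<Rightarrow>\<^sub>0 int) set set" where
  "q0 N c = im_d1 N #>\<^bsub>Cc MI FI 0 N\<^esub> c"

lemma Q0_comm_group: "comm_group (Q0 N)"
  unfolding Q0_def
  using comm_group.abelian_FactGroup[OF Cc_comm_group normal.axioms(1)[OF im_d1_normal]] by simp

lemma Q0_group: "group (Q0 N)"
  using Q0_comm_group comm_group.axioms(2) by blast

lemma im_d1_normal_Ind: "1 \<le> N \<Longrightarrow> im_d1 N \<lhd> Ind N (N - 1)"
  using im_d1_normal[of N] Cc_0 by simp

lemma q0_hom: "q0 N \<in> hom (Cc MI FI 0 N) (Q0 N)"
  unfolding q0_def Q0_def using normal.r_coset_hom_Mod[OF im_d1_normal] .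

lemma q0_ctens_closed:
  "1 \<le> N \<Longrightarrow> a \<in> hatS N \<Longrightarrow> w \<in> carrier (MI (N - 1)) \<Longrightarrow> q0 N (ctens N (N - 1) a w) \<in> carrier (Q0 N)"
  using hom_in_carrier[OF q0_hom] ctens_closed Cc_0 by simp

lemma q0_ctens_act:
  assumes "1 \<le> N" "x \<in> hatS N" "k \<in> hatS (N - 1)" "w \<in> carrier (MI (N - 1))"
  shows "q0 N (ctens N (N - 1) (hmul x k) w) = q0 N (ctens N (N - 1) x (mact FI (N - 1) k w))"
  using ctens_act[OF _ assms(2-4)] by simp

definition lower_incl :: "nat \<Rightarrow> nat \<Rightarrow> 'v \<Rightarrow> 'v IVelem" where
  "lower_incl N j v = incl (N - 1) j (itens j (N - 1) (hcos (N - 1) j hone) v)"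

lemma lower_incl_closed: "j < N \<Longrightarrow> v \<in> carrier (V j) \<Longrightarrow> lower_incl N j v \<in> carrier (MI (N - 1))"
  unfolding lower_incl_def by (intro incl_closed itens_closed) auto

lemma lower_incl_hom:
  assumes "j < N"
  shows "lower_incl N j \<in> hom (V j) (MI (N - 1))"
proof -
  have "j \<le> N - 1" using assms by simp
  then show ?thesis
    using hom_compose[OF itens_hom incl_hom, of j "N - 1" hone] unfolding lower_incl_def[abs_def] comp_def
    by simp
qed

lemma mact_lower_incl:
  assumes "j < N" "k \<in> hatS (N - 1)" "v \<in> carrier (V j)"
  shows "mact FI (N - 1) k (lower_incl N j v) = incl (N - 1) j (itens j (N - 1) (hcos (N - 1) j k) v)"
  unfolding lower_incl_def using mact_incl_itens[of j "N - 1" k hone v] assms by simp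

lemma q0_tau_invariant:
  assumes N: "2 \<le> N" and j: "j \<le> N - 2" and a: "a \<in> hatS N" and v: "v \<in> carrier (V j)"
  shows "q0 N (ctens N (N - 1) (hmul a (tau N)) (lower_incl N j v)) = q0 N (ctens N (N - 1) a (lower_incl N j v))"
proof -
  define E where "E = incl (N - 2) j (itens j (N - 2) (hcos (N - 2) j hone) v)"
  have E: "E \<in> carrier (MI (N - 2))" unfolding E_def using incl_closed[OF j itens_closed[OF j hone_in_hatS v]] .
  have "Suc (N - 2) = N - 1" using N by arith
  then have iota_E: "iota FI (N - 2) E = lower_incl N j v"
    unfolding E_def lower_incl_def using iota_incl_itens[OF j hone_in_hatS v] by simp
  have c: "ctens N (N - 1) (hmul a (tau N)) (lower_incl N j v) \<in> carrier (Ind N (N - 1))"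
    "ctens N (N - 1) a (lower_incl N j v) \<in> carrier (Ind N (N - 1))"
    using ctens_closed hmul_closed[OF a tau_in_hatS[OF N]] a lower_incl_closed v j N by simp_all
  have "ctens N (N - 1) (hmul a (tau N)) (lower_incl N j v) \<otimes>\<^bsub>Ind N (N - 1)\<^esub> inv\<^bsub>Ind N (N - 1)\<^esub>
      ctens N (N - 1) a (lower_incl N j v) \<in> im_d1 N"
    using d1_tensor[OF N a E] iota_E ctens_closed[OF a E] Cc_1[OF N] unfolding im_d1_def
    by (metis image_eqI)
  moreover have "1 \<le> N" using N by simp
  ultimately show ?thesis
    unfolding q0_def Cc_0[OF \<open>1 \<le> N\<close>] using normal.rcos_eq_iff[OF im_d1_normal_Ind c] by simp
qed

lemma q0_i2_lower_invariant:
  assumes jN: "j < N" and u: "u \<in> hatS (N - j - 1)" and a: "a \<in> hatS N" and v: "v \<in> carrier (V j)"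
  shows "q0 N (ctens N (N - 1) (hmul a (i2 N (N - j) u)) (lower_incl N j v))
       = q0 N (ctens N (N - 1) a (lower_incl N j v))"
proof -
  have u': "u \<in> hatS (N - 1 - j)" using u by (simp add: diff_commute)
  define w where "w = i2 (N - 1) (N - 1 - j) u"
  have w: "w \<in> hatS (N - 1)" unfolding w_def using i2_in_hatS[OF _ u'] by simp
  have "i2 N (N - j) u = w" unfolding w_def using i2_i2_shift[of j "N - 1" N u] u' jN by simp
  moreover have "hcos (N - 1) j w = hcos (N - 1) j hone"
    unfolding w_def using hcos_hmul_i2[OF hone_in_hatS u'] by simp
  ultimately show ?thesis
    using q0_ctens_act[OF _ a w lower_incl_closed[OF jN v]] mact_lower_incl[OF jN w v] jN
    by (simp add: lower_incl_def)
qed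

lemma q0_i2_invariant:
  assumes jN: "j < N" and u: "u \<in> hatS (N - j)" and a: "a \<in> hatS N" and v: "v \<in> carrier (V j)"
  shows "q0 N (ctens N (N - 1) (hmul a (i2 N (N - j) u)) (lower_incl N j v))
       = q0 N (ctens N (N - 1) a (lower_incl N j v))"
proof -
  define F where "F b = (\<lambda>v\<in>carrier (V j). q0 N (ctens N (N - 1) b (lower_incl N j v)))" for b
  define U where "U = {u \<in> hatS (N - j). \<forall>a\<in>hatS N. F (hmul a (i2 N (N - j) u)) = F a}"
  have U: "subgroup U (hatSgrp (N - j))"
    unfolding U_def by (rule i2_right_stabilizer_subgroup) simp
  have lower: "hatS (N - j - 1) \<subseteq> U"
    using q0_i2_lower_invariant[OF jN] hatS_mono[OF diff_le_self, of "N - j" 1]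
    by (auto simp: U_def F_def intro!: restrict_ext)
  have "hatS (N - j) \<subseteq> U"
  proof (cases "2 \<le> N - j")
    case True
    then have "tau (N - j) \<in> U"
      using tau_in_hatS[OF True] i2_tau[OF True, of N] q0_tau_invariant[of N j]
      by (auto simp: U_def F_def intro!: restrict_ext)
    then show ?thesis using hatS_generated[OF True U] lower by simp
  next
    case False
    then show ?thesis using hatS_small[of "N - j"] subgroup.one_closed[OF U] by simp
  qed
  then have "F (hmul a (i2 N (N - j) u)) = F a" using u a unfolding U_def by blast
  then have "F (hmul a (i2 N (N - j) u)) v = F a v" by simp
  then show ?thesis using v by (simp add: F_def)
qed

lemma q0_some_hcos:
  assumes "j < N" "g \<in> hatS N" "s \<in> hatS N" "v \<in> carrier (V j)"
  shows "q0 N (ctens N (N - 1) (hmul g (SOME s'. s' \<in> hcos N j s)) (lower_incl N j v))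
       = q0 N (ctens N (N - 1) (hmul g s) (lower_incl N j v))"
proof -
  have "(SOME s'. s' \<in> hcos N j s) \<in> hcos N j s" using hcos_self by (rule someI)
  then obtain u where "u \<in> hatS (N - j)" "(SOME s'. s' \<in> hcos N j s) = hmul s (i2 N (N - j) u)"
    by (auto simp: hcos_mem)
  then show ?thesis
    using q0_i2_invariant[OF assms(1) _ hmul_closed[OF assms(2,3)] assms(4)] by (simp add: hmul_assoc)
qed

lemma q0_lower_incl_act:
  assumes "j < N" "x \<in> hatS N" "k \<in> hatS j" "v \<in> carrier (V j)"
  shows "q0 N (ctens N (N - 1) (hmul x k) (lower_incl N j v))
       = q0 N (ctens N (N - 1) x (lower_incl N j (A j k v)))"
proof -
  have jN: "j \<le> N - 1" using assms(1) by simp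
  have k: "k \<in> hatS (N - 1)" using hatS_mono[OF jN] assms(3) by blast
  have "mact FI (N - 1) k (lower_incl N j v) = lower_incl N j (A j k v)"
    using mact_lower_incl[OF assms(1) k assms(4)] itens_act[OF jN hone_in_hatS assms(3,4)]
    by (simp add: lower_incl_def)
  then show ?thesis using q0_ctens_act[OF _ assms(2) k lower_incl_closed[OF assms(1,4)]] assms(1) by simp
qed

lemma q0_lower_incl_mult:
  assumes "j < N" "x \<in> hatS N" "v \<in> carrier (V j)" "v' \<in> carrier (V j)"
  shows "q0 N (ctens N (N - 1) x (lower_incl N j (v \<otimes>\<^bsub>V j\<^esub> v')))
       = q0 N (ctens N (N - 1) x (lower_incl N j v)) \<otimes>\<^bsub>Q0 N\<^esub> q0 N (ctens N (N - 1) x (lower_incl N j v'))"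
proof -
  have N: "1 \<le> N" "N - 1 \<le> N" using assms(1) by simp_all
  have "q0 N \<circ> ctens N (N - 1) x \<circ> lower_incl N j \<in> hom (V j) (Q0 N)"
    using hom_compose[OF hom_compose[OF lower_incl_hom[OF assms(1)] ctens_hom[OF N(2) assms(2)]]
        q0_hom[of N, unfolded Cc_0[OF N(1)]]] by (simp add: comp_assoc)
  then show ?thesis using hom_mult assms(3,4) by fastforce
qed

definition rho_summand ::
    "nat \<Rightarrow> hs \<Rightarrow> nat \<Rightarrow> (hs set \<times> 'v \<Rightarrow>\<^sub>0 int) set \<Rightarrow> (hs \<times> 'v IVelem \<Rightarrow>\<^sub>0 int) set set"
  where "rho_summand N g j = tlift (Q0 N)
    (\<lambda>(f, v). inv\<^bsub>Q0 N\<^esub> q0 N (ctens N (N - 1) (hmul g (SOME s. s \<in> f)) (lower_incl N j v))) (FIhat j N) (V j)"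

context
  fixes N j g
  assumes jN: "j < N" and g: "g \<in> hatS N"
begin

private lemma rho_summand_wf:
  shows "\<And>f v. f \<in> FIhat j N \<Longrightarrow> v \<in> carrier (V j) \<Longrightarrow>
      inv\<^bsub>Q0 N\<^esub> q0 N (ctens N (N - 1) (hmul g (SOME s. s \<in> f)) (lower_incl N j v)) \<in> carrier (Q0 N)"
    and "\<And>f k v. f \<in> FIhat j N \<Longrightarrow> k \<in> hatS j \<Longrightarrow> v \<in> carrier (V j) \<Longrightarrow>
      inv\<^bsub>Q0 N\<^esub> q0 N (ctens N (N - 1) (hmul g (SOME s. s \<in> firact j N f k)) (lower_incl N j v))
      = inv\<^bsub>Q0 N\<^esub> q0 N (ctens N (N - 1) (hmul g (SOME s. s \<in> f)) (lower_incl N j (A j k v)))"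
    and "\<And>f v v'. f \<in> FIhat j N \<Longrightarrow> v \<in> carrier (V j) \<Longrightarrow> v' \<in> carrier (V j) \<Longrightarrow>
      inv\<^bsub>Q0 N\<^esub> q0 N (ctens N (N - 1) (hmul g (SOME s. s \<in> f)) (lower_incl N j (v \<otimes>\<^bsub>V j\<^esub> v')))
      = inv\<^bsub>Q0 N\<^esub> q0 N (ctens N (N - 1) (hmul g (SOME s. s \<in> f)) (lower_incl N j v))
        \<otimes>\<^bsub>Q0 N\<^esub> inv\<^bsub>Q0 N\<^esub> q0 N (ctens N (N - 1) (hmul g (SOME s. s \<in> f)) (lower_incl N j v'))"
proof -
  interpret Q: comm_group "Q0 N" by (rule Q0_comm_group)
  have N: "1 \<le> N" using jN by simp
  have some: "(SOME s'. s' \<in> hcos N j s) \<in> hatS N" if "s \<in> hatS N" for s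
    using someI[of "\<lambda>x. x \<in> hcos N j s", OF hcos_self] hmul_closed[OF that i2_in_hatS[OF diff_le_self]]
    by (auto simp: hcos_mem)
  show "\<And>f v. f \<in> FIhat j N \<Longrightarrow> v \<in> carrier (V j) \<Longrightarrow>
      inv\<^bsub>Q0 N\<^esub> q0 N (ctens N (N - 1) (hmul g (SOME s. s \<in> f)) (lower_incl N j v)) \<in> carrier (Q0 N)"
    using q0_ctens_closed[OF N hmul_closed[OF g some]] lower_incl_closed[OF jN] by (auto simp: FIhat_iff)
  show "\<And>f v v'. f \<in> FIhat j N \<Longrightarrow> v \<in> carrier (V j) \<Longrightarrow> v' \<in> carrier (V j) \<Longrightarrow>
      inv\<^bsub>Q0 N\<^esub> q0 N (ctens N (N - 1) (hmul g (SOME s. s \<in> f)) (lower_incl N j (v \<otimes>\<^bsub>V j\<^esub> v')))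
      = inv\<^bsub>Q0 N\<^esub> q0 N (ctens N (N - 1) (hmul g (SOME s. s \<in> f)) (lower_incl N j v))
        \<otimes>\<^bsub>Q0 N\<^esub> inv\<^bsub>Q0 N\<^esub> q0 N (ctens N (N - 1) (hmul g (SOME s. s \<in> f)) (lower_incl N j v'))"
    using q0_lower_incl_mult[OF jN hmul_closed[OF g some]] q0_ctens_closed[OF N hmul_closed[OF g some]]
      lower_incl_closed[OF jN] by (auto simp: FIhat_iff Q.inv_mult)
next
  fix f k v assume f: "f \<in> FIhat j N" and k: "k \<in> hatS j" and v: "v \<in> carrier (V j)"
  then obtain s where s: "s \<in> hatS N" "f = hcos N j s" by (auto simp: FIhat_iff)
  have kN: "k \<in> hatS N" using hatS_mono[of j N] k jN by auto
  have "q0 N (ctens N (N - 1) (hmul g (SOME s'. s' \<in> firact j N f k)) (lower_incl N j v))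
      = q0 N (ctens N (N - 1) (hmul (hmul g s) k) (lower_incl N j v))"
    using firact_hcos[of j N s k] q0_some_hcos[OF jN g hmul_closed[OF s(1) kN] v] s k jN
    by (simp add: hmul_assoc)
  also have "\<dots> = q0 N (ctens N (N - 1) (hmul g (SOME s'. s' \<in> f)) (lower_incl N j (A j k v)))"
    using q0_lower_incl_act[OF jN hmul_closed[OF g s(1)] k v] q0_some_hcos[OF jN g s(1) A_closed[OF k v]] s
    by simp
  finally show "inv\<^bsub>Q0 N\<^esub> q0 N (ctens N (N - 1) (hmul g (SOME s. s \<in> firact j N f k)) (lower_incl N j v))
      = inv\<^bsub>Q0 N\<^esub> q0 N (ctens N (N - 1) (hmul g (SOME s. s \<in> f)) (lower_incl N j (A j k v)))" by simp
qed

lemma rho_summand_hom: "rho_summand N g j \<in> hom (Ic j N) (Q0 N)"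
  unfolding rho_summand_def Icomp_eq
  by (rule tlift_hom[OF Ic_wf Q0_comm_group]) (use rho_summand_wf in auto)

lemma rho_summand_tensor:
  assumes "s \<in> hatS N" "v \<in> carrier (V j)"
  shows "rho_summand N g j (itens j N (hcos N j s) v)
    = inv\<^bsub>Q0 N\<^esub> q0 N (ctens N (N - 1) (hmul g s) (lower_incl N j v))"
proof -
  have "rho_summand N g j (itens j N (hcos N j s) v)
      = inv\<^bsub>Q0 N\<^esub> q0 N (ctens N (N - 1) (hmul g (SOME s'. s' \<in> hcos N j s)) (lower_incl N j v))"
    unfolding rho_summand_def
    by (rule trans[OF tlift_tensor[OF Ic_wf Q0_comm_group]])
      (use rho_summand_wf hcos_in_FIhat[of j N s] assms jN in auto)
  then show ?thesis using q0_some_hcos[OF jN g assms] by simp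
qed

end

lemma rho_summand_postcomp:
  assumes j: "j < N" and g: "g \<in> hatS N" and k: "k \<in> hatS N" and z: "z \<in> carrier (Ic j N)"
  shows "rho_summand N (hmul g k) j z = rho_summand N g j (postcomp j N N (hcos N N k) z)"
proof -
  have jN: "j \<le> N" using j by simp
  have "rho_summand N (hmul g k) j z = (rho_summand N g j \<circ> postcomp j N N (hcos N N k)) z"
  proof (rule Ic_hom_eqI[OF Q0_group rho_summand_hom[OF j hmul_closed[OF g k]] _ _ z])
    show "rho_summand N g j \<circ> postcomp j N N (hcos N N k) \<in> hom (Ic j N) (Q0 N)"
      using hom_compose[OF postcomp_hom[OF jN hcos_in_FIhat[OF order_refl k]] rho_summand_hom[OF j g]] .
  next
    fix s v assume "s \<in> hatS N" "v \<in> carrier (V j)"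
    then show "rho_summand N (hmul g k) j (itens j N (hcos N j s) v)
        = (rho_summand N g j \<circ> postcomp j N N (hcos N N k)) (itens j N (hcos N j s) v)"
      using postcomp_hcos[OF jN order_refl _ k] rho_summand_tensor[OF j] g k
      by (simp add: hmul_closed hmul_assoc)
  qed
  then show ?thesis by simp
qed

definition rho_elem :: "nat \<Rightarrow> hs \<Rightarrow> 'v IVelem \<Rightarrow> (hs \<times> 'v IVelem \<Rightarrow>\<^sub>0 int) set set" where
  "rho_elem N g y = finprod (Q0 N) (\<lambda>j. rho_summand N g j (y j)) {..<N}"

lemma rho_summand_component_closed:
  "g \<in> hatS N \<Longrightarrow> y \<in> carrier (MI N) \<Longrightarrow> (\<lambda>j. rho_summand N g j (y j)) \<in> {..<N} \<rightarrow> carrier (Q0 N)"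
  using hom_in_carrier[OF rho_summand_hom IV_component_closed] by auto

lemma rho_elem_hom:
  assumes g: "g \<in> hatS N"
  shows "rho_elem N g \<in> hom (MI N) (Q0 N)"
proof (rule homI)
  interpret Q: comm_group "Q0 N" by (rule Q0_comm_group)
  show "rho_elem N g y \<in> carrier (Q0 N)" if "y \<in> carrier (MI N)" for y
    using rho_summand_component_closed[OF g that] by (simp add: rho_elem_def)
  fix y y' assume y: "y \<in> carrier (MI N)" and y': "y' \<in> carrier (MI N)"
  have "rho_elem N g (y \<otimes>\<^bsub>MI N\<^esub> y')
      = finprod (Q0 N) (\<lambda>j. rho_summand N g j (y j) \<otimes>\<^bsub>Q0 N\<^esub> rho_summand N g j (y' j)) {..<N}"
    unfolding rho_elem_def
    using hom_mult[OF rho_summand_hom[OF _ g] IV_component_closed[OF y] IV_component_closed[OF y']]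
      rho_summand_component_closed[OF g y] rho_summand_component_closed[OF g y']
    by (intro Q.finprod_cong') (auto simp: IV_mult)
  also have "\<dots> = rho_elem N g y \<otimes>\<^bsub>Q0 N\<^esub> rho_elem N g y'"
    unfolding rho_elem_def
    using Q.finprod_multf[OF rho_summand_component_closed[OF g y] rho_summand_component_closed[OF g y']] .
  finally show "rho_elem N g (y \<otimes>\<^bsub>MI N\<^esub> y') = rho_elem N g y \<otimes>\<^bsub>Q0 N\<^esub> rho_elem N g y'" .
qed

lemma rho_elem_incl:
  assumes g: "g \<in> hatS N" and j: "j < N" and z: "z \<in> carrier (Ic j N)"
  shows "rho_elem N g (incl N j z) = rho_summand N g j z"
proof -
  interpret Q: comm_group "Q0 N" by (rule Q0_comm_group)
  have c: "rho_summand N g j z \<in> carrier (Q0 N)" using hom_in_carrier[OF rho_summand_hom[OF j g] z] .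
  have "rho_elem N g (incl N j z)
      = finprod (Q0 N) (\<lambda>i. if j = i then rho_summand N g j z else \<one>\<^bsub>Q0 N\<^esub>) {..<N}"
    unfolding rho_elem_def
    using c group_hom.hom_one[OF group_homI[OF Ic_group Q0_group rho_summand_hom[OF _ g]]]
    by (intro Q.finprod_cong') auto
  also have "\<dots> = rho_summand N g j z"
    using Q.finprod_singleton[of j "{..<N}" "\<lambda>i. rho_summand N g j z"] j c by simp
  finally show ?thesis .
qed

definition rho :: "nat \<Rightarrow> (hs \<times> 'v IVelem \<Rightarrow>\<^sub>0 int) set \<Rightarrow> (hs \<times> 'v IVelem \<Rightarrow>\<^sub>0 int) set set" where
  "rho N = tlift (Q0 N) (\<lambda>(g, y). rho_elem N g y) (hatS N) (MI N)"

context
  fixes N :: nat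
begin

private lemma rho_wf:
  shows "\<And>g y. g \<in> hatS N \<Longrightarrow> y \<in> carrier (MI N) \<Longrightarrow> rho_elem N g y \<in> carrier (Q0 N)"
    and "\<And>g k y. g \<in> hatS N \<Longrightarrow> k \<in> hatS N \<Longrightarrow> y \<in> carrier (MI N) \<Longrightarrow>
      rho_elem N (hmul g k) y = rho_elem N g (mact FI N k y)"
    and "\<And>g y y'. g \<in> hatS N \<Longrightarrow> y \<in> carrier (MI N) \<Longrightarrow> y' \<in> carrier (MI N) \<Longrightarrow>
      rho_elem N g (y \<otimes>\<^bsub>MI N\<^esub> y') = rho_elem N g y \<otimes>\<^bsub>Q0 N\<^esub> rho_elem N g y'"
proof -
  interpret Q: comm_group "Q0 N" by (rule Q0_comm_group)
  show "\<And>g y. g \<in> hatS N \<Longrightarrow> y \<in> carrier (MI N) \<Longrightarrow> rho_elem N g y \<in> carrier (Q0 N)"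
    using hom_in_carrier[OF rho_elem_hom] .
  show "\<And>g y y'. g \<in> hatS N \<Longrightarrow> y \<in> carrier (MI N) \<Longrightarrow> y' \<in> carrier (MI N) \<Longrightarrow>
      rho_elem N g (y \<otimes>\<^bsub>MI N\<^esub> y') = rho_elem N g y \<otimes>\<^bsub>Q0 N\<^esub> rho_elem N g y'"
    using hom_mult[OF rho_elem_hom] .
  fix g k y assume g: "g \<in> hatS N" and k: "k \<in> hatS N" and y: "y \<in> carrier (MI N)"
  show "rho_elem N (hmul g k) y = rho_elem N g (mact FI N k y)"
    unfolding rho_elem_def
    using rho_summand_postcomp[OF _ g k IV_component_closed[OF y]]
      rho_summand_component_closed[OF g mact_closed[OF k y]]
    by (intro Q.finprod_cong') (auto simp: mact_def IVmor_eq)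
qed

lemma rho_hom: "rho N \<in> hom (Ind N N) (Q0 N)"
  unfolding rho_def by (rule tlift_hom[OF Ind_wf[OF order_refl] Q0_comm_group]) (use rho_wf in auto)

lemma rho_tensor: "g \<in> hatS N \<Longrightarrow> y \<in> carrier (MI N) \<Longrightarrow> rho N (ctens N N g y) = rho_elem N g y"
  unfolding rho_def
  by (rule trans[OF tlift_tensor[OF Ind_wf[OF order_refl] Q0_comm_group]]) (use rho_wf in auto)

end

lemma rho_elem_iota:
  assumes N: "N = Suc k" and t: "t \<in> hatS N" and w: "w \<in> carrier (MI k)"
  shows "rho_elem N t (iota FI k w) = inv\<^bsub>Q0 N\<^esub> q0 N (ctens N k t w)"
proof -
  have N1: "1 \<le> N" and k: "N - 1 = k" "k \<le> N" using N by simp_all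
  interpret Q: comm_group "Q0 N" by (rule Q0_comm_group)
  let ?rhs = "(\<lambda>x. inv\<^bsub>Q0 N\<^esub> x) \<circ> q0 N \<circ> ctens N k t"
  have lhs_hom: "rho_elem N t \<circ> iota FI k \<in> hom (MI k) (Q0 N)"
    using hom_compose[OF iota_hom rho_elem_hom[OF t, unfolded N]] N by simp
  have "(\<lambda>x. inv\<^bsub>Q0 N\<^esub> x) \<in> hom (Q0 N) (Q0 N)" by (rule homI) (simp_all add: Q.inv_mult)
  then have rhs_hom: "?rhs \<in> hom (MI k) (Q0 N)"
    using hom_compose[OF hom_compose[OF ctens_hom[OF k(2) t] q0_hom[of N, unfolded Cc_0[OF N1] k]]]
    by (simp add: comp_assoc)
  have "(rho_elem N t \<circ> iota FI k) w = ?rhs w"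
  proof (rule IV_hom_eqI[OF Q0_group lhs_hom rhs_hom _ w])
    fix j z assume j: "j \<le> k" and z: "z \<in> carrier (Ic j k)"
    have jN: "j < N" using j N by simp
    have "((rho_elem N t \<circ> iota FI k) \<circ> incl k j) z = (?rhs \<circ> incl k j) z"
    proof (rule Ic_hom_eqI[OF Q0_group hom_compose[OF incl_hom[OF j] lhs_hom]
          hom_compose[OF incl_hom[OF j] rhs_hom] _ z])
      fix s v assume s: "s \<in> hatS k" and v: "v \<in> carrier (V j)"
      have sN: "s \<in> hatS N" "s \<in> hatS (N - 1)" using hatS_mono[of k N] s N by auto
      have "rho_elem N t (iota FI k (incl k j (itens j k (hcos k j s) v)))
          = inv\<^bsub>Q0 N\<^esub> q0 N (ctens N (N - 1) (hmul t s) (lower_incl N j v))"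
        using iota_incl_itens[OF j s v] rho_elem_incl[OF t jN itens_closed[OF less_imp_le[OF jN] sN(1) v]]
          rho_summand_tensor[OF jN t sN(1) v] N by simp
      also have "\<dots> = inv\<^bsub>Q0 N\<^esub> q0 N (ctens N k t (incl k j (itens j k (hcos k j s) v)))"
        using q0_ctens_act[OF N1 t sN(2) lower_incl_closed[OF jN v]] mact_lower_incl[OF jN sN(2) v] k
        by simp
      finally show "((rho_elem N t \<circ> iota FI k) \<circ> incl k j) (itens j k (hcos k j s) v)
          = (?rhs \<circ> incl k j) (itens j k (hcos k j s) v)" by simp
    qed
    then show "(rho_elem N t \<circ> iota FI k) (incl k j z) = ?rhs (incl k j z)" by simp
  qed
  then show ?thesis by simp
qed

lemma rho_d0:
  assumes N1: "1 \<le> N" and X: "X \<in> carrier (Cc MI FI 0 N)"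
  shows "rho N (dmap MI FI 0 N X) = q0 N X"
proof -
  obtain k where N: "N = Suc k" using N1 by (cases N) auto
  then have k: "N - 1 = k" by simp
  interpret Q: comm_group "Q0 N" by (rule Q0_comm_group)
  have "(rho N \<circ> dmap MI FI 0 N) X = q0 N X"
  proof (rule Ind_hom_eqI[OF _ Q0_group hom_compose[OF d0_hom[OF N1] rho_hom]
        q0_hom[of N, unfolded Cc_0[OF N1]]])
    show "X \<in> carrier (Ind N (N - 1))" using X Cc_0[OF N1] by simp
  next
    fix t w assume t: "t \<in> hatS N" and w: "w \<in> carrier (MI (N - 1))"
    have w': "w \<in> carrier (MI k)" "iota FI k w \<in> carrier (MI N)" using w iota_closed N by simp_all
    have "rho N (dmap MI FI 0 N (ctens N (N - 1) t w)) = inv\<^bsub>Q0 N\<^esub> rho N (ctens N N t (iota FI k w))"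
      using d0_tensor[OF N1 t w] group_hom.hom_inv[OF group_homI[OF Ind_group[OF order_refl] Q0_group rho_hom]]
        ctens_closed[OF t w'(2)] N by simp
    also have "\<dots> = q0 N (ctens N (N - 1) t w)"
      using rho_tensor[OF t w'(2)] rho_elem_iota[OF N t w'(1)] q0_ctens_closed[OF N1 t w] k by simp
    finally show "(rho N \<circ> dmap MI FI 0 N) (ctens N (N - 1) t w) = q0 N (ctens N (N - 1) t w)" by simp
  qed simp
  then show ?thesis by simp
qed

lemma ker_d0_subset_im_d1:
  assumes "X \<in> kernel (Cc MI FI 0 N) (Cc MI FI (-1) N) (dmap MI FI 0 N)"
  shows "X \<in> im_d1 N"
proof (cases "1 \<le> N")
  case True
  have X: "X \<in> carrier (Cc MI FI 0 N)" "dmap MI FI 0 N X = \<one>\<^bsub>Ind N N\<^esub>"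
    using assms by (auto simp: kernel_def Cc_m1)
  have "q0 N X = \<one>\<^bsub>Q0 N\<^esub>"
    using rho_d0[OF True X(1)] X(2) group_hom.hom_one[OF group_homI[OF Ind_group[OF order_refl] Q0_group rho_hom]]
    by simp
  then show ?thesis
    using X(1) group.rcos_self[OF Cc_group X(1) normal.axioms(1)[OF im_d1_normal]]
    by (simp add: q0_def Q0_def)
next
  case False
  then have C: "Cc MI FI 0 N = tens {} hmul {} (MI 0) (mact FI 0)" by (simp add: Cc_degenerate)
  have "carrier (Cc MI FI 0 N) \<subseteq> {\<one>\<^bsub>Cc MI FI 0 N\<^esub>}"
  proof
    fix Y assume "Y \<in> carrier (Cc MI FI 0 N)"
    then obtain a where "a \<in> carrier (tfree {} (MI 0))" "Y = tclass {} hmul {} (MI 0) (mact FI 0) a"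
      unfolding C tens_carrier by blast
    then show "Y \<in> {\<one>\<^bsub>Cc MI FI 0 N\<^esub>}" using tens_one[OF Ind_empty_wf] C by (simp add: tfree_carrier)
  qed
  moreover have "X \<in> carrier (Cc MI FI 0 N)" using assms by (simp add: kernel_def)
  ultimately show ?thesis using subgroup.one_closed[OF normal.axioms(1)[OF im_d1_normal]] by blast
qed

lemma H0_trivial: "carrier (Hcs MI FI 0 N) = {\<one>\<^bsub>Hcs MI FI 0 N\<^esub>}"
proof -
  let ?K = "kernel (Cc MI FI 0 N) (Cc MI FI (-1) N) (dmap MI FI 0 N)"
  let ?G = "(Cc MI FI 0 N)\<lparr>carrier := ?K\<rparr>"
  have "\<one>\<^bsub>Cc MI FI 0 N\<^esub> \<in> ?K"
  proof (cases "1 \<le> N")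
    case True
    then show ?thesis
      using group_hom.hom_one[OF group_homI[OF Ind_group Ind_group d0_hom[OF True]]]
        Cc_one_closed[of 0 N] by (auto simp: kernel_def Cc_0 Cc_m1)
  qed (use Cc_one_closed[of 0 N] in \<open>auto simp: kernel_def dmap_def\<close>)
  moreover have "im_d1 N #>\<^bsub>?G\<^esub> a = im_d1 N" if "a \<in> ?K" for a
    using group.coset_join2[OF Cc_group _ normal.axioms(1)[OF im_d1_normal] ker_d0_subset_im_d1[OF that]]
      subgroup.mem_carrier[OF normal.axioms(1)[OF im_d1_normal] ker_d0_subset_im_d1[OF that]]
    by (simp add: r_coset_def)
  ultimately have "(\<lambda>a. im_d1 N #>\<^bsub>?G\<^esub> a) ` ?K = {im_d1 N}" by blast
  then have "carrier (?G Mod im_d1 N) = {im_d1 N}" by (simp add: carrier_FactGroup)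
  then show ?thesis by (simp add: Hcs_def im_d1_def)
qed

end

theorem mainTheorem11:
  fixes V :: "nat \<Rightarrow> 'v monoid" and A :: "nat \<Rightarrow> hs \<Rightarrow> 'v \<Rightarrow> 'v"
  assumes "smod V A"
  shows "(\<forall>n. carrier (Hcs (IV V A) (IVmor V A) 0 n) = {\<one>\<^bsub>Hcs (IV V A) (IVmor V A) 0 n\<^esub>})
       \<and> (\<forall>n. \<exists>\<phi>. \<phi> \<in> iso (Hcs (IV V A) (IVmor V A) (-1) n) (V n)
              \<and> (\<forall>g\<in>hatS n. \<forall>y\<in>carrier (Hcs (IV V A) (IVmor V A) (-1) n).
                    \<phi> (Hact_m1 (IV V A) (IVmor V A) n g y) = A n g (\<phi> y)))"
proof -
  interpret hatS_module_seq V A by unfold_locales (rule assms)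
  show ?thesis using H0_trivial Hm1_to_V_iso Hm1_to_V_equivariant by blast
qed

end
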